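(* Let $M$ be a $3$-connected simple matroid with a $3$-connected simple minor $N$. Suppose that $(C^*,p)$ is a disconnected $(M,N)$-vertbarrier with line $L$, and that $y\in L$ is not vertically $N$-contractible in $M$. Then there is an $(M,N)$-vertbarrier $(D^*,y)$ with $L-y\subseteq D^*$.
   Context: An element $y$ is vertically $N$-contractible in $M$ if $\mathrm{si}(M/y)$ (the simplification) is a $3$-connected matroid with an $N$-minor. An $(M,N)$-vertbarrier is a pair $(C^*,p)$ where $C^*$ is a cocircuit of $M$ of rank $3$, $p\in\mathrm{cl}_M(C^* )-C^*$, and $\mathrm{si}(M/\{x,p\})$ is $3$-connected with an $N$-minor for some $x\in C^*$. It is disconnected if $M|(C^*\cup p)$ is disconnected; in that case $M|(C^*\cup p)$ is the direct sum of a rank-$2$ restriction (a line with at least three elements) and a single coloop, and the ground set of the rank-$2$ part is called the line of $(C^*,p)$. *)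

theory Defs
  imports Main
begin

record 'a matroid =
  ground :: "'a set"
  indep :: "'a set \<Rightarrow> bool"

definition matroid :: "('a, 'c) matroid_scheme \<Rightarrow> bool" where
  "matroid M \<longleftrightarrow> finite (ground M) \<and> indep M {} \<and>
     (\<forall>I. indep M I \<longrightarrow> I \<subseteq> ground M) \<and>
     (\<forall>I J. indep M J \<and> I \<subseteq> J \<longrightarrow> indep M I) \<and>
     (\<forall>I J. indep M I \<and> indep M J \<and> card I < card J \<longrightarrow>
        (\<exists>x\<in>J - I. indep M (insert x I)))"

definition rk :: "'a matroid \<Rightarrow> 'a set \<Rightarrow> nat" where
  "rk M X = Max (card ` {I. I \<subseteq> X \<and> indep M I})"

definition cl :: "'a matroid \<Rightarrow> 'a set \<Rightarrow> 'a set" where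
  "cl M X = {x \<in> ground M. rk M (insert x X) = rk M X}"

definition basis :: "'a matroid \<Rightarrow> 'a set \<Rightarrow> bool" where
  "basis M B \<longleftrightarrow> indep M B \<and> (\<forall>I. indep M I \<and> B \<subseteq> I \<longrightarrow> I = B)"

definition dual :: "'a matroid \<Rightarrow> 'a matroid" where
  "dual M = \<lparr>ground = ground M,
     indep = (\<lambda>I. I \<subseteq> ground M \<and> (\<exists>B. basis M B \<and> I \<inter> B = {}))\<rparr>"

definition circuit :: "'a matroid \<Rightarrow> 'a set \<Rightarrow> bool" where
  "circuit M C \<longleftrightarrow> C \<subseteq> ground M \<and> \<not> indep M C \<and> (\<forall>x\<in>C. indep M (C - {x}))"

definition cocircuit :: "'a matroid \<Rightarrow> 'a set \<Rightarrow> bool" where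
  "cocircuit M C \<longleftrightarrow> circuit (dual M) C"

definition restrict :: "'a matroid \<Rightarrow> 'a set \<Rightarrow> 'a matroid" where
  "restrict M Y = \<lparr>ground = ground M \<inter> Y, indep = (\<lambda>I. I \<subseteq> ground M \<inter> Y \<and> indep M I)\<rparr>"

definition delete :: "'a matroid \<Rightarrow> 'a set \<Rightarrow> 'a matroid" where
  "delete M X = restrict M (ground M - X)"

definition contract :: "'a matroid \<Rightarrow> 'a set \<Rightarrow> 'a matroid" where
  "contract M X = \<lparr>ground = ground M - X,
     indep = (\<lambda>I. I \<subseteq> ground M - X \<and> rk M (I \<union> X) = card I + rk M X)\<rparr>"

definition is_minor :: "'a matroid \<Rightarrow> 'a matroid \<Rightarrow> bool" where
  "is_minor M' M \<longleftrightarrow> (\<exists>C D. C \<subseteq> ground M \<and> D \<subseteq> ground M \<and> C \<inter> D = {} \<and>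
      M' = delete (contract M C) D)"

definition iso :: "'b matroid \<Rightarrow> 'a matroid \<Rightarrow> bool" where
  "iso N M \<longleftrightarrow> (\<exists>f. bij_betw f (ground N) (ground M) \<and>
      (\<forall>I. I \<subseteq> ground N \<longrightarrow> (indep N I \<longleftrightarrow> indep M (f ` I))))"

definition has_minor :: "'a matroid \<Rightarrow> 'b matroid \<Rightarrow> bool" where
  "has_minor M N \<longleftrightarrow> (\<exists>M'. is_minor M' M \<and> iso N M')"

definition loop :: "'a matroid \<Rightarrow> 'a \<Rightarrow> bool" where
  "loop M x \<longleftrightarrow> x \<in> ground M \<and> \<not> indep M {x}"

definition parallel :: "'a matroid \<Rightarrow> 'a \<Rightarrow> 'a \<Rightarrow> bool" where
  "parallel M x y \<longleftrightarrow> x \<in> ground M \<and> y \<in> ground M \<and> x \<noteq> y \<and>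
     indep M {x} \<and> indep M {y} \<and> \<not> indep M {x, y}"

definition simple :: "'a matroid \<Rightarrow> bool" where
  "simple M \<longleftrightarrow> (\<forall>x\<in>ground M. indep M {x}) \<and>
     (\<forall>x\<in>ground M. \<forall>y\<in>ground M. x \<noteq> y \<longrightarrow> indep M {x, y})"

text \<open>S is a simplification of M: delete all loops and all but one element
  of each parallel class (defined up to the choice of representatives).\<close>
definition simplification :: "'a matroid \<Rightarrow> 'a matroid \<Rightarrow> bool" where
  "simplification M S \<longleftrightarrow> (\<exists>T. T \<subseteq> ground M \<and> S = restrict M T \<and>
     (\<forall>t\<in>T. \<not> loop M t) \<and>
     (\<forall>x\<in>ground M. \<not> loop M x \<longrightarrow> (\<exists>!t. t \<in> T \<and> (t = x \<or> parallel M x t))))"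

definition tutte_sep :: "'a matroid \<Rightarrow> nat \<Rightarrow> 'a set \<Rightarrow> bool" where
  "tutte_sep M k X \<longleftrightarrow> X \<subseteq> ground M \<and> card X \<ge> k \<and> card (ground M - X) \<ge> k \<and>
     rk M X + rk M (ground M - X) < rk M (ground M) + k"

definition connected :: "'a matroid \<Rightarrow> bool" where
  "connected M \<longleftrightarrow> \<not> (\<exists>X. tutte_sep M 1 X)"

definition three_connected :: "'a matroid \<Rightarrow> bool" where
  "three_connected M \<longleftrightarrow> \<not> (\<exists>X. tutte_sep M 1 X) \<and> \<not> (\<exists>X. tutte_sep M 2 X)"

definition si_contract_good :: "'a matroid \<Rightarrow> 'b matroid \<Rightarrow> 'a set \<Rightarrow> bool" where
  "si_contract_good M N X \<longleftrightarrow>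
     (\<exists>S. simplification (contract M X) S \<and> three_connected S \<and> has_minor S N)"

definition vert_contractible :: "'a matroid \<Rightarrow> 'b matroid \<Rightarrow> 'a \<Rightarrow> bool" where
  "vert_contractible M N y \<longleftrightarrow> y \<in> ground M \<and> si_contract_good M N {y}"

definition vertbarrier :: "'a matroid \<Rightarrow> 'b matroid \<Rightarrow> 'a set \<Rightarrow> 'a \<Rightarrow> bool" where
  "vertbarrier M N C p \<longleftrightarrow> cocircuit M C \<and> rk M C = 3 \<and> p \<in> cl M C - C \<and>
     (\<exists>x\<in>C. si_contract_good M N {x, p})"

text \<open>L is the line of the disconnected vertbarrier (C,p): M|(C \<union> p) is the direct
  sum of M|L (rank 2, at least three elements) and a single (coloop) element.\<close>
definition line_of :: "'a matroid \<Rightarrow> 'a set \<Rightarrow> 'a \<Rightarrow> 'a set \<Rightarrow> bool" where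
  "line_of M C p L \<longleftrightarrow> L \<subseteq> insert p C \<and> card (insert p C - L) = 1 \<and>
     rk M L = 2 \<and> card L \<ge> 3 \<and> rk M (insert p C - L) = 1 \<and>
     rk M L + rk M (insert p C - L) = rk M (insert p C)"

end

theory Submission
  imports Defs
begin

text \<open>Take \<open>w \<in> L - {y}\<close>. Since \<open>L\<close> is a line through \<open>p\<close> and the vertbarrier provides some
  \<open>x \<in> C\<close> with \<open>si (M / {x, p})\<close> 3-connected with an \<open>N\<close>-minor, the same holds for a pair of
  points of \<open>L\<close> (if \<open>x\<close> is the coloop \<open>z\<close>, exchange it for a point of \<open>L\<close>), hence for
  \<open>{w, y}\<close>, which spans the same line. As \<open>si (M / y)\<close> is not both 3-connected and with an
  \<open>N\<close>-minor, while the 3-connected \<open>si (M / {w, y})\<close> is a minor of it, \<open>si (M / y)\<close> has a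
  2-separation. The 3-connectivity of \<open>si (M / {w, y})\<close> shapes that separation so that the side
  avoiding \<open>w\<close> spans, with \<open>y\<close>, a hyperplane \<open>H\<close> of \<open>M\<close> not containing \<open>w\<close> whose complement
  has rank 3. Then \<open>D = E - H\<close> is a cocircuit of rank 3 meeting \<open>L\<close> in \<open>L - {y}\<close>, and
  \<open>(D, y)\<close> is the required vertbarrier.\<close>

locale finite_matroid =
  fixes M :: "'a matroid"
  assumes matroid: "matroid M"
begin

abbreviation "E \<equiv> ground M"
abbreviation "r \<equiv> rk M"

lemma finite_ground: "finite E"
  using matroid unfolding matroid_def by blast

lemma indep_empty: "indep M {}"
  using matroid unfolding matroid_def by blast

lemma indep_subset_ground: "indep M I \<Longrightarrow> I \<subseteq> E"
  using matroid unfolding matroid_def by blast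

lemma indep_subset: "indep M J \<Longrightarrow> I \<subseteq> J \<Longrightarrow> indep M I"
  using matroid unfolding matroid_def by blast

lemma indep_augment:
  "indep M I \<Longrightarrow> indep M J \<Longrightarrow> card I < card J \<Longrightarrow> \<exists>x\<in>J - I. indep M (insert x I)"
  using matroid unfolding matroid_def by blast

lemma indep_finite: "indep M I \<Longrightarrow> finite I"
  using indep_subset_ground finite_ground by (meson finite_subset)

lemma finite_indep_cards: "finite (card ` {I. I \<subseteq> X \<and> indep M I})"
proof -
  have "{I. I \<subseteq> X \<and> indep M I} \<subseteq> Pow E"
    using indep_subset_ground by blast
  then show ?thesis
    using finite_ground by (simp add: finite_subset)
qed

lemma card_le_rk: "I \<subseteq> X \<Longrightarrow> indep M I \<Longrightarrow> card I \<le> r X"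
  unfolding rk_def using finite_indep_cards by (intro Max_ge) auto

lemma rk_witness:
  obtains I where "I \<subseteq> X" "indep M I" "card I = r X"
proof -
  have "{} \<in> {I. I \<subseteq> X \<and> indep M I}"
    using indep_empty by blast
  then have "r X \<in> card ` {I. I \<subseteq> X \<and> indep M I}"
    unfolding rk_def using finite_indep_cards by (intro Max_in) auto
  then obtain I where "I \<subseteq> X" "indep M I" "r X = card I"
    by blast
  then show thesis
    using that by simp
qed

lemma rk_mono: "X \<subseteq> Y \<Longrightarrow> r X \<le> r Y"
proof -
  assume "X \<subseteq> Y"
  obtain I where "I \<subseteq> X" "indep M I" "card I = r X"
    using rk_witness .
  then show ?thesis
    using card_le_rk[of I Y] \<open>X \<subseteq> Y\<close> by simp
qed

lemma rk_le_card: "finite X \<Longrightarrow> r X \<le> card X"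
proof -
  assume "finite X"
  obtain I where "I \<subseteq> X" "indep M I" "card I = r X"
    using rk_witness .
  then show ?thesis
    using card_mono[OF \<open>finite X\<close>, of I] by simp
qed

lemma rk_indep: "indep M I \<Longrightarrow> r I = card I"
  using card_le_rk[of I I] rk_le_card[OF indep_finite] by (simp add: antisym)

lemma rk_Int_ground: "r (X \<inter> E) = r X"
proof (rule antisym)
  obtain I where "I \<subseteq> X" "indep M I" "card I = r X"
    using rk_witness .
  moreover have "I \<subseteq> X \<inter> E"
    using \<open>I \<subseteq> X\<close> indep_subset_ground[OF \<open>indep M I\<close>] by blast
  ultimately show "r X \<le> r (X \<inter> E)"
    using card_le_rk by metis
qed (simp add: rk_mono)

lemma rk_le_rk_ground: "r X \<le> r E"
  using rk_Int_ground[of X] rk_mono[of "X \<inter> E" E] by simp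

lemma card_le_rk_ground: "X \<subseteq> E \<Longrightarrow> r X \<le> card X"
  using rk_le_card finite_subset finite_ground by blast

lemma indep_extend:
  "indep M I \<Longrightarrow> I \<subseteq> X \<Longrightarrow> \<exists>J. I \<subseteq> J \<and> J \<subseteq> X \<and> indep M J \<and> card J = r X"
proof (induction "r X - card I" arbitrary: I)
  case 0
  then have "card I = r X"
    using card_le_rk[of I X] by simp
  then show ?case
    using 0 by blast
next
  case (Suc k)
  obtain K where K: "K \<subseteq> X" "indep M K" "card K = r X"
    using rk_witness .
  have "card I < card K"
    using Suc.hyps(2) K(3) by simp
  then obtain x where x: "x \<in> K - I" "indep M (insert x I)"
    using indep_augment[OF Suc.prems(1) K(2)] by blast
  have "card (insert x I) = Suc (card I)"
    using x(1) indep_finite[OF Suc.prems(1)] by simp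
  then have "k = r X - card (insert x I)"
    using Suc.hyps(2) by simp
  moreover have "insert x I \<subseteq> X"
    using x(1) K(1) Suc.prems(2) by blast
  ultimately obtain J where "insert x I \<subseteq> J" "J \<subseteq> X" "indep M J" "card J = r X"
    using Suc.hyps(1) x(2) by blast
  then show ?case
    by blast
qed

lemma rk_submod: "r (A \<union> B) + r (A \<inter> B) \<le> r A + r B"
proof -
  obtain I where I: "I \<subseteq> A \<inter> B" "indep M I" "card I = r (A \<inter> B)"
    using rk_witness .
  obtain J where J: "I \<subseteq> J" "J \<subseteq> A \<union> B" "indep M J" "card J = r (A \<union> B)"
    using indep_extend[OF I(2), of "A \<union> B"] I(1) by blast
  have fin: "finite J"
    using J(3) by (rule indep_finite)
  have "card (J \<inter> A) \<le> r A" "card (J \<inter> B) \<le> r B"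
    using J(3) by (auto intro!: card_le_rk elim: indep_subset)
  moreover have "card J + card (J \<inter> A \<inter> B) = card (J \<inter> A) + card (J \<inter> B)"
  proof -
    have "(J \<inter> A) \<union> (J \<inter> B) = J" "(J \<inter> A) \<inter> (J \<inter> B) = J \<inter> A \<inter> B"
      using J(2) by blast+
    then show ?thesis
      using card_Un_Int[of "J \<inter> A" "J \<inter> B"] fin by simp
  qed
  moreover have "card I \<le> card (J \<inter> A \<inter> B)"
    using I(1) J(1) fin by (intro card_mono) auto
  ultimately show ?thesis
    using I(3) J(4) by linarith
qed

lemma rk_insert_le: "r (insert x A) \<le> Suc (r A)"
  using rk_submod[of "{x}" A] rk_le_card[of "{x}"] by simp

lemma cl_subset_ground: "cl M X \<subseteq> E"
  unfolding cl_def by auto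

lemma subset_cl: "X \<subseteq> E \<Longrightarrow> X \<subseteq> cl M X"
  unfolding cl_def by (auto simp: insert_absorb)

lemma rk_insert_cl: "x \<in> cl M X \<Longrightarrow> r (insert x X) = r X"
  unfolding cl_def by auto

lemma in_clI: "x \<in> E \<Longrightarrow> r (insert x X) \<le> r X \<Longrightarrow> x \<in> cl M X"
  unfolding cl_def using rk_mono[OF subset_insertI, of X x] by auto

lemma rk_insert_notin_cl: "x \<in> E \<Longrightarrow> x \<notin> cl M X \<Longrightarrow> r (insert x X) = Suc (r X)"
  unfolding cl_def using rk_mono[OF subset_insertI, of X x] rk_insert_le[of x X] by auto

lemma rk_Un_cl: "B \<subseteq> cl M X \<Longrightarrow> r (X \<union> B) = r X"
proof -
  assume B: "B \<subseteq> cl M X"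
  have "finite B"
    using B cl_subset_ground finite_ground by (meson finite_subset)
  then show ?thesis
    using B
  proof (induction B rule: finite_induct)
    case (insert b B)
    have "r (X \<union> insert b B) + r (insert b X \<inter> (X \<union> B)) \<le> r (insert b X) + r (X \<union> B)"
      using rk_submod[of "insert b X" "X \<union> B"] by (simp add: insert_absorb)
    moreover have "r X \<le> r (insert b X \<inter> (X \<union> B))" "r X \<le> r (X \<union> insert b B)"
      by (auto intro: rk_mono)
    ultimately show ?case
      using insert rk_insert_cl[of b X] by simp
  qed simp
qed

lemma rk_le_if_subset_cl: "A \<subseteq> cl M Z \<Longrightarrow> r A \<le> r Z"
  using rk_Un_cl[of A Z] rk_mono[of A "Z \<union> A"] by simp

lemma rk_cl: "r (cl M X) = r X"
proof (rule antisym)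
  have "X \<inter> E \<subseteq> cl M X"
    unfolding cl_def by (auto simp: insert_absorb)
  then show "r X \<le> r (cl M X)"
    using rk_mono rk_Int_ground by metis
qed (simp add: rk_le_if_subset_cl)

lemma cl_mono: "X \<subseteq> Y \<Longrightarrow> cl M X \<subseteq> cl M Y"
proof
  fix x
  assume XY: "X \<subseteq> Y" and x: "x \<in> cl M X"
  have "r (insert x Y) + r (insert x X \<inter> Y) \<le> r (insert x X) + r Y"
    using rk_submod[of "insert x X" Y] XY by (simp add: Un_absorb1)
  moreover have "r X \<le> r (insert x X \<inter> Y)"
    using XY by (intro rk_mono) blast
  ultimately show "x \<in> cl M Y"
    using x rk_insert_cl[OF x] cl_subset_ground by (intro in_clI) auto
qed

lemma cl_subset_clI: "A \<subseteq> cl M Z \<Longrightarrow> cl M A \<subseteq> cl M Z"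
proof
  fix x
  assume A: "A \<subseteq> cl M Z" and x: "x \<in> cl M A"
  have "r (insert x Z) \<le> r (insert x (Z \<union> A))"
    by (rule rk_mono) blast
  also have "\<dots> = r (Z \<union> A)"
    using x cl_mono[of A "Z \<union> A"] rk_insert_cl[of x "Z \<union> A"] by auto
  also have "\<dots> = r Z"
    using rk_Un_cl[OF A] .
  finally show "x \<in> cl M Z"
    using x cl_subset_ground by (intro in_clI) auto
qed

lemma cl_idem: "cl M (cl M X) = cl M X"
  using cl_subset_clI[of "cl M X" X] subset_cl[OF cl_subset_ground] by blast

lemma rk_Un_eq_if_same_cl:
  "X\<^sub>1 \<subseteq> cl M X\<^sub>2 \<Longrightarrow> X\<^sub>2 \<subseteq> cl M X\<^sub>1 \<Longrightarrow> r (A \<union> X\<^sub>1) = r (A \<union> X\<^sub>2)"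
proof -
  assume "X\<^sub>1 \<subseteq> cl M X\<^sub>2" "X\<^sub>2 \<subseteq> cl M X\<^sub>1"
  then have "r ((A \<union> X\<^sub>1) \<union> X\<^sub>2) = r (A \<union> X\<^sub>1)" "r ((A \<union> X\<^sub>2) \<union> X\<^sub>1) = r (A \<union> X\<^sub>2)"
    using cl_mono[of X\<^sub>1 "A \<union> X\<^sub>1"] cl_mono[of X\<^sub>2 "A \<union> X\<^sub>2"] by (auto intro!: rk_Un_cl)
  then show ?thesis
    by (simp add: Un_ac)
qed

lemma cl_exchange:
  assumes "Z \<subseteq> E" "t \<in> E" "t \<notin> cl M Z" "e \<in> E" "e \<notin> cl M Z" "e \<in> cl M (insert t Z)"
  shows "t \<in> cl M (insert e Z)"
proof (rule in_clI)
  have "r (insert e (insert t Z)) = Suc (r Z)"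
    using assms rk_insert_cl rk_insert_notin_cl by metis
  then show "r (insert t (insert e Z)) \<le> r (insert e Z)"
    using assms(4,5) rk_insert_notin_cl by (simp add: insert_commute)
qed (rule assms(2))

end

lemma Max_card_eqI:
  assumes "\<And>I. P I \<Longrightarrow> card I \<le> k" "P I\<^sub>0" "card I\<^sub>0 = k"
  shows "Max (card ` {I. P I}) = k"
proof (rule Max_eqI)
  show "finite (card ` {I. P I})"
    by (rule finite_subset[of _ "{..k}"]) (use assms(1) in auto)
qed (use assms in auto)

context finite_matroid
begin

lemma ground_contract: "ground (contract M X) = E - X"
  unfolding contract_def by simp

lemma indep_contract: "indep (contract M X) I \<longleftrightarrow> I \<subseteq> E - X \<and> r (I \<union> X) = card I + r X"
  unfolding contract_def by simp

lemma ground_restrict_contract: "ground (restrict (contract M X) T) = (E - X) \<inter> T"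
  unfolding restrict_def contract_def by auto

lemma indep_restrict_contract:
  "indep (restrict (contract M X) T) I \<longleftrightarrow> I \<subseteq> (E - X) \<inter> T \<and> r (I \<union> X) = card I + r X"
  unfolding restrict_def contract_def by auto

lemma loop_contract: "loop (contract M X) e \<longleftrightarrow> e \<in> E - X \<and> r (insert e X) \<noteq> Suc (r X)"
  unfolding loop_def indep_contract ground_contract by auto

lemma parallel_contract: "parallel (contract M X) a b \<longleftrightarrow>
  a \<in> E - X \<and> b \<in> E - X \<and> a \<noteq> b \<and> r (insert a X) = Suc (r X) \<and> r (insert b X) = Suc (r X)
  \<and> r (insert a (insert b X)) \<noteq> Suc (Suc (r X))"
  unfolding parallel_def indep_contract ground_contract by auto

lemma rk_restrict_contract:
  assumes "X \<subseteq> E" "A \<subseteq> T" "T \<subseteq> E - X"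
  shows "rk (restrict (contract M X) T) A = r (A \<union> X) - r X"
proof -
  obtain I where I: "I \<subseteq> X" "indep M I" "card I = r X"
    using rk_witness .
  obtain J where J: "I \<subseteq> J" "J \<subseteq> A \<union> X" "indep M J" "card J = r (A \<union> X)"
    using indep_extend[OF I(2), of "A \<union> X"] I(1) by blast
  have fin: "finite J"
    using J(3) by (rule indep_finite)
  have "card (J \<inter> X) \<le> r X"
    using J(3) by (auto intro: card_le_rk elim: indep_subset)
  moreover have "card I \<le> card (J \<inter> X)"
    using I(1) J(1) fin by (intro card_mono) auto
  moreover have "card J = card (J - X) + card (J \<inter> X)"
    using fin by (metis Int_Diff_Un Int_Diff_disjoint Un_commute card_Un_disjoint finite_Diff inf_commute finite_Int)
  ultimately have card_J_X: "card (J - X) = r (A \<union> X) - r X"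
    using I(3) J(4) by linarith
  have "card J \<le> r ((J - X) \<union> X)"
    using J(3) by (intro card_le_rk) auto
  then have "r ((J - X) \<union> X) = r (A \<union> X)"
    using J(2,4) rk_mono[of "(J - X) \<union> X" "A \<union> X"] by fastforce
  moreover have "r X \<le> r (A \<union> X)"
    by (rule rk_mono) blast
  ultimately have "J - X \<subseteq> A \<and> indep (restrict (contract M X) T) (J - X)"
    unfolding indep_restrict_contract using J(2) assms card_J_X by auto
  moreover have "card I' \<le> r (A \<union> X) - r X" if "I' \<subseteq> A \<and> indep (restrict (contract M X) T) I'" for I'
    using that rk_mono[of "I' \<union> X" "A \<union> X"] unfolding indep_restrict_contract by fastforce
  ultimately show ?thesis
    unfolding rk_def[of "restrict (contract M X) T"]
    by (intro Max_card_eqI[where I\<^sub>0 = "J - X"]) (use card_J_X in auto)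
qed

lemma basis_card: "basis M B \<Longrightarrow> card B = r E"
proof -
  assume B: "basis M B"
  then have "indep M B"
    unfolding basis_def by blast
  then have le: "card B \<le> r E"
    using card_le_rk indep_subset_ground by blast
  obtain K where K: "K \<subseteq> E" "indep M K" "card K = r E"
    using rk_witness .
  have "\<not> card B < card K"
    using indep_augment[OF \<open>indep M B\<close> K(2)] B unfolding basis_def by blast
  then show ?thesis
    using le K(3) by linarith
qed

lemma basis_iff_card: "basis M B \<longleftrightarrow> indep M B \<and> card B = r E"
proof
  assume "indep M B \<and> card B = r E"
  moreover have "I = B" if "indep M I" "B \<subseteq> I" "card B = r E" for I
    using that card_le_rk[OF indep_subset_ground] indep_finite card_seteq by metis
  ultimately show "basis M B"
    unfolding basis_def by blast
qed (simp add: basis_card basis_def)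

lemma ex_basis_subset_iff: "(\<exists>B. basis M B \<and> B \<subseteq> A) \<longleftrightarrow> r A = r E"
proof
  assume "\<exists>B. basis M B \<and> B \<subseteq> A"
  then show "r A = r E"
    using basis_iff_card card_le_rk rk_le_rk_ground antisym by metis
next
  assume "r A = r E"
  moreover obtain I where "I \<subseteq> A" "indep M I" "card I = r A"
    using rk_witness .
  ultimately show "\<exists>B. basis M B \<and> B \<subseteq> A"
    using basis_iff_card by auto
qed

lemma indep_dual_iff: "indep (dual M) I \<longleftrightarrow> I \<subseteq> E \<and> r (E - I) = r E"
proof -
  have "(\<exists>B. basis M B \<and> I \<inter> B = {}) \<longleftrightarrow> (\<exists>B. basis M B \<and> B \<subseteq> E - I)"
    using indep_subset_ground unfolding basis_def by blast
  then show ?thesis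
    unfolding dual_def using ex_basis_subset_iff[of "E - I"] by auto
qed

lemma cocircuit_iff:
  "cocircuit M D \<longleftrightarrow> D \<subseteq> E \<and> r (E - D) \<noteq> r E \<and> (\<forall>x\<in>D. r (insert x (E - D)) = r E)"
proof -
  have "E - (D - {x}) = insert x (E - D)" if "x \<in> D" "D \<subseteq> E" for x
    using that by blast
  moreover have "ground (dual M) = E"
    unfolding dual_def by simp
  ultimately show ?thesis
    unfolding cocircuit_def circuit_def indep_dual_iff by auto
qed

lemma simplification_restrict_contract_iff:
  assumes "T \<subseteq> E - X"
  shows "simplification (contract M X) (restrict (contract M X) T) \<longleftrightarrow>
    (\<forall>t\<in>T. \<not> loop (contract M X) t) \<and>
    (\<forall>x\<in>E - X. \<not> loop (contract M X) x \<longrightarrow> (\<exists>!t. t \<in> T \<and> (t = x \<or> parallel (contract M X) x t)))"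
proof -
  have "T' = T" if "T' \<subseteq> E - X" "restrict (contract M X) T = restrict (contract M X) T'" for T'
  proof -
    have "(E - X) \<inter> T = (E - X) \<inter> T'"
      using arg_cong[OF that(2), of ground] by (simp only: ground_restrict_contract)
    then show ?thesis
      using that(1) assms by blast
  qed
  then show ?thesis
    unfolding simplification_def ground_contract using assms by (intro iffI) (metis, blast)
qed

end

lemma ground_delete_contract: "ground (delete (contract S C) D) = ground S - C - D"
  unfolding delete_def restrict_def contract_def by auto

lemma indep_delete_contract:
  "indep (delete (contract S C) D) I \<longleftrightarrow> I \<subseteq> ground S - C - D \<and> rk S (I \<union> C) = card I + rk S C"
  unfolding delete_def restrict_def contract_def by auto

locale matroid_iso =
  fixes S :: "'a matroid" and S' :: "'c matroid" and f :: "'a \<Rightarrow> 'c"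
  assumes bij: "bij_betw f (ground S) (ground S')"
    and indep_image: "\<And>I. I \<subseteq> ground S \<Longrightarrow> indep S I \<longleftrightarrow> indep S' (f ` I)"
begin

lemma inj: "inj_on f (ground S)"
  using bij by (rule bij_betw_imp_inj_on)

lemma image_ground: "f ` ground S = ground S'"
  using bij by (rule bij_betw_imp_surj_on)

lemma image_diff: "A \<subseteq> ground S \<Longrightarrow> B \<subseteq> ground S \<Longrightarrow> f ` (A - B) = f ` A - f ` B"
  using inj by (intro inj_on_image_set_diff) auto

lemma card_image_subset_ground: "A \<subseteq> ground S \<Longrightarrow> card (f ` A) = card A"
  using inj by (meson card_image inj_on_subset)

lemma rk_image:
  assumes "A \<subseteq> ground S"
  shows "rk S' (f ` A) = rk S A"
proof -
  have "{I. I \<subseteq> f ` A \<and> indep S' I} = (\<lambda>J. f ` J) ` {J. J \<subseteq> A \<and> indep S J}"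
  proof (intro equalityI subsetI)
    fix I
    assume "I \<in> {I. I \<subseteq> f ` A \<and> indep S' I}"
    moreover have "f ` {a \<in> A. f a \<in> I} = I" if "I \<subseteq> f ` A"
      using that by blast
    ultimately show "I \<in> (\<lambda>J. f ` J) ` {J. J \<subseteq> A \<and> indep S J}"
      using indep_image[of "{a \<in> A. f a \<in> I}"] assms by (intro image_eqI) auto
  qed (use indep_image assms in auto)
  also have "card ` \<dots> = card ` {J. J \<subseteq> A \<and> indep S J}"
    unfolding image_image using assms card_image_subset_ground by (intro image_cong) auto
  finally have "card ` {I. I \<subseteq> f ` A \<and> indep S' I} = card ` {J. J \<subseteq> A \<and> indep S J}"
    by (simp only: image_image)
  then show ?thesis
    unfolding rk_def by simp
qed

lemma tutte_sep_vimage: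
  assumes "tutte_sep S' k X'"
  shows "tutte_sep S k (ground S \<inter> f -` X')"
proof -
  let ?X = "ground S \<inter> f -` X'"
  have "X' \<subseteq> ground S'"
    using assms unfolding tutte_sep_def by blast
  have X: "f ` ?X = X'"
  proof
    show "X' \<subseteq> f ` ?X"
    proof
      fix b
      assume "b \<in> X'"
      then obtain a where "a \<in> ground S" "b = f a"
        using \<open>X' \<subseteq> ground S'\<close> image_ground by blast
      then show "b \<in> f ` ?X"
        using \<open>b \<in> X'\<close> by blast
    qed
  qed blast
  have Y: "f ` (ground S - ?X) = ground S' - X'"
  proof
    show "ground S' - X' \<subseteq> f ` (ground S - ?X)"
    proof
      fix b
      assume "b \<in> ground S' - X'"
      then obtain a where "a \<in> ground S" "b = f a"
        using image_ground by blast
      then show "b \<in> f ` (ground S - ?X)"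
        using \<open>b \<in> ground S' - X'\<close> by blast
    qed
  qed (use image_ground in blast)
  have "card ?X = card X'"
    using card_image_subset_ground[of ?X] X by simp
  moreover have "card (ground S - ?X) = card (ground S' - X')"
    using card_image_subset_ground[of "ground S - ?X"] Y by simp
  moreover have "rk S ?X = rk S' X'"
    using rk_image[of ?X] X by simp
  moreover have "rk S (ground S - ?X) = rk S' (ground S' - X')"
    using rk_image[of "ground S - ?X"] Y by simp
  moreover have "rk S (ground S) = rk S' (ground S')"
    using rk_image[of "ground S"] image_ground by simp
  ultimately show ?thesis
    using assms unfolding tutte_sep_def by (metis inf_le1)
qed

lemma three_connected_image: "three_connected S \<Longrightarrow> three_connected S'"
  unfolding three_connected_def using tutte_sep_vimage by blast

lemma image_ground_diff:
  assumes "C \<subseteq> ground S" "D \<subseteq> ground S"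
  shows "f ` (ground S - C - D) = ground S' - f ` C - f ` D"
proof -
  have "f ` (ground S - C - D) = f ` (ground S - C) - f ` D"
    using assms by (intro image_diff) auto
  also have "f ` (ground S - C) = ground S' - f ` C"
    using assms image_diff[of "ground S" C] image_ground by simp
  finally show ?thesis .
qed

lemma indep_delete_contract_image:
  assumes "C \<subseteq> ground S" "D \<subseteq> ground S" "I \<subseteq> ground S - C - D"
  shows "indep (delete (contract S C) D) I \<longleftrightarrow> indep (delete (contract S' (f ` C)) (f ` D)) (f ` I)"
proof -
  have "f ` I \<subseteq> ground S' - f ` C - f ` D"
    using image_mono[OF assms(3), of f] image_ground_diff[OF assms(1,2)] by simp
  moreover have "I \<union> C \<subseteq> ground S"
    using assms by blast
  then have "rk S' (f ` I \<union> f ` C) = rk S (I \<union> C)"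
    using rk_image[of "I \<union> C"] by (simp add: image_Un)
  moreover have "card (f ` I) = card I"
    using assms(3) by (intro card_image_subset_ground) blast
  ultimately show ?thesis
    unfolding indep_delete_contract using assms rk_image[of C] by auto
qed

lemma has_minor_image:
  assumes "has_minor S N"
  shows "has_minor S' N"
proof -
  obtain M' g where "is_minor M' S" and g: "bij_betw g (ground N) (ground M')"
    and indep_g: "\<And>I. I \<subseteq> ground N \<Longrightarrow> indep N I \<longleftrightarrow> indep M' (g ` I)"
    using assms unfolding has_minor_def iso_def by blast
  then obtain C D where CD: "C \<subseteq> ground S" "D \<subseteq> ground S" "C \<inter> D = {}"
    and M': "M' = delete (contract S C) D"
    unfolding is_minor_def by blast
  let ?M'' = "delete (contract S' (f ` C)) (f ` D)"
  have "f ` C \<inter> f ` D = {}"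
    using inj_on_image_Int[OF inj CD(1,2)] CD(3) by simp
  moreover have "f ` C \<subseteq> ground S'" "f ` D \<subseteq> ground S'"
    using CD(1,2) image_ground by blast+
  ultimately have "is_minor ?M'' S'"
    unfolding is_minor_def by blast
  moreover have "inj_on f (ground S - C - D)"
    using inj by (rule inj_on_subset) blast
  then have "bij_betw f (ground M') (ground ?M'')"
    unfolding M' ground_delete_contract bij_betw_def using image_ground_diff[OF CD(1,2)] by blast
  then have "bij_betw (f \<circ> g) (ground N) (ground ?M'')"
    by (rule bij_betw_trans[OF g])
  moreover have "indep N I \<longleftrightarrow> indep ?M'' ((f \<circ> g) ` I)" if "I \<subseteq> ground N" for I
  proof -
    have "g ` I \<subseteq> ground S - C - D"
      using that g unfolding M' ground_delete_contract bij_betw_def by blast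
    then show ?thesis
      using indep_g[OF that] indep_delete_contract_image[OF CD(1,2)] M' by (simp add: image_comp)
  qed
  ultimately show ?thesis
    unfolding has_minor_def iso_def by blast
qed

end

text \<open>The map \<open>\<phi>\<close> identifies the restriction of \<open>M / X\<^sub>1\<close> to \<open>U\<close> with the restriction of
  \<open>M / X\<^sub>2\<close> to \<open>\<phi> ` U\<close>, and every non-loop of \<open>M / X\<^sub>2\<close> lies in \<open>\<phi> ` U\<close>; so any
  simplification of \<open>M / X\<^sub>1\<close> inside \<open>U\<close> is carried to an isomorphic simplification of \<open>M / X\<^sub>2\<close>.\<close>

locale contraction_transfer = finite_matroid +
  fixes X\<^sub>1 X\<^sub>2 U :: "'a set" and \<phi> :: "'a \<Rightarrow> 'a"
  assumes U: "U \<subseteq> E - X\<^sub>1" and inj: "inj_on \<phi> U" and image_U: "\<phi> ` U \<subseteq> E - X\<^sub>2"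
    and nonloops_in_image: "\<And>e. e \<in> E - X\<^sub>2 \<Longrightarrow> e \<notin> cl M X\<^sub>2 \<Longrightarrow> e \<in> \<phi> ` U"
    and rk_shift: "\<And>A. A \<subseteq> U \<Longrightarrow> r (A \<union> X\<^sub>1) + r X\<^sub>2 = r (\<phi> ` A \<union> X\<^sub>2) + r X\<^sub>1"
begin

abbreviation "M\<^sub>1 \<equiv> contract M X\<^sub>1"
abbreviation "M\<^sub>2 \<equiv> contract M X\<^sub>2"

lemma loop_iff: "a \<in> U \<Longrightarrow> loop M\<^sub>1 a \<longleftrightarrow> loop M\<^sub>2 (\<phi> a)"
  using rk_shift[of "{a}"] U image_U unfolding loop_contract by auto

lemma parallel_iff: "a \<in> U \<Longrightarrow> b \<in> U \<Longrightarrow> parallel M\<^sub>1 a b \<longleftrightarrow> parallel M\<^sub>2 (\<phi> a) (\<phi> b)"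
  using rk_shift[of "{a}"] rk_shift[of "{b}"] rk_shift[of "{a, b}"] U image_U inj
  unfolding parallel_contract inj_on_def by auto

lemma simplification_image:
  assumes T: "T \<subseteq> U" and simp: "simplification M\<^sub>1 (restrict M\<^sub>1 T)"
  shows "simplification M\<^sub>2 (restrict M\<^sub>2 (\<phi> ` T))"
  unfolding simplification_def ground_contract
proof (intro exI conjI ballI impI)
  show "\<phi> ` T \<subseteq> E - X\<^sub>2"
    using T image_U by blast
  show "restrict M\<^sub>2 (\<phi> ` T) = restrict M\<^sub>2 (\<phi> ` T)" ..
next
  fix t'
  assume "t' \<in> \<phi> ` T"
  then obtain s where s: "s \<in> T" "t' = \<phi> s"
    by blast
  have "T \<subseteq> E - X\<^sub>1"
    using T U by blast
  then have "\<not> loop M\<^sub>1 s"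
    using simp s(1) unfolding simplification_restrict_contract_iff[OF \<open>T \<subseteq> E - X\<^sub>1\<close>] by blast
  then show "\<not> loop M\<^sub>2 t'"
    using loop_iff[of s] s T by auto
next
  fix e
  assume e: "e \<in> E - X\<^sub>2" and "\<not> loop M\<^sub>2 e"
  then have "e \<notin> cl M X\<^sub>2"
    using rk_insert_cl[of e X\<^sub>2] unfolding loop_contract by auto
  then obtain e\<^sub>0 where e\<^sub>0: "e\<^sub>0 \<in> U" "e = \<phi> e\<^sub>0"
    using nonloops_in_image e by blast
  have "T \<subseteq> E - X\<^sub>1"
    using T U by blast
  moreover have "e\<^sub>0 \<in> E - X\<^sub>1"
    using e\<^sub>0 U by blast
  moreover have "\<not> loop M\<^sub>1 e\<^sub>0"
    using e\<^sub>0 loop_iff[of e\<^sub>0] \<open>\<not> loop M\<^sub>2 e\<close> by simp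
  ultimately have "\<exists>!t. t \<in> T \<and> (t = e\<^sub>0 \<or> parallel M\<^sub>1 e\<^sub>0 t)"
    using simp unfolding simplification_restrict_contract_iff[OF \<open>T \<subseteq> E - X\<^sub>1\<close>] by blast
  then obtain t where t: "t \<in> T" "t = e\<^sub>0 \<or> parallel M\<^sub>1 e\<^sub>0 t"
    and uniq: "\<And>s. s \<in> T \<Longrightarrow> s = e\<^sub>0 \<or> parallel M\<^sub>1 e\<^sub>0 s \<Longrightarrow> s = t"
    by blast
  show "\<exists>!t'. t' \<in> \<phi> ` T \<and> (t' = e \<or> parallel M\<^sub>2 e t')"
  proof (rule ex1I[of _ "\<phi> t"])
    show "\<phi> t \<in> \<phi> ` T \<and> (\<phi> t = e \<or> parallel M\<^sub>2 e (\<phi> t))"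
      using t T e\<^sub>0 parallel_iff[of e\<^sub>0 t] by blast
  next
    fix t'
    assume t': "t' \<in> \<phi> ` T \<and> (t' = e \<or> parallel M\<^sub>2 e t')"
    then obtain s where s: "s \<in> T" "t' = \<phi> s"
      by blast
    have "s = e\<^sub>0 \<or> parallel M\<^sub>1 e\<^sub>0 s"
      using t' s T e\<^sub>0 inj parallel_iff[of e\<^sub>0 s] unfolding inj_on_def by blast
    then show "t' = \<phi> t"
      using uniq s by simp
  qed
qed

lemma si_contract_good_transfer:
  assumes "simplification M\<^sub>1 S" "three_connected S" "has_minor S N" "ground S \<subseteq> U"
  shows "si_contract_good M N X\<^sub>2"
proof -
  obtain T where T: "T \<subseteq> E - X\<^sub>1" "S = restrict M\<^sub>1 T"
    using assms(1) unfolding simplification_def ground_contract by blast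
  then have "ground S = T"
    using ground_restrict_contract by auto
  then have TU: "T \<subseteq> U"
    using assms(4) by simp
  let ?S' = "restrict M\<^sub>2 (\<phi> ` T)"
  have "ground ?S' = \<phi> ` T"
    using TU image_U ground_restrict_contract by auto
  interpret matroid_iso S ?S' \<phi>
  proof
    show "bij_betw \<phi> (ground S) (ground ?S')"
      unfolding \<open>ground S = T\<close> \<open>ground ?S' = \<phi> ` T\<close> bij_betw_def
      using inj_on_subset[OF inj TU] by blast
  next
    fix I
    assume "I \<subseteq> ground S"
    then have "I \<subseteq> U" "I \<subseteq> (E - X\<^sub>1) \<inter> T"
      using \<open>ground S = T\<close> T TU by auto
    moreover have "\<phi> ` I \<subseteq> (E - X\<^sub>2) \<inter> \<phi> ` T"
      using \<open>I \<subseteq> ground S\<close> \<open>ground S = T\<close> TU image_U by blast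
    moreover have "card (\<phi> ` I) = card I"
      using card_image inj_on_subset[OF inj \<open>I \<subseteq> U\<close>] by blast
    ultimately show "indep S I \<longleftrightarrow> indep ?S' (\<phi> ` I)"
      unfolding T(2) indep_restrict_contract using rk_shift[of I] by auto
  qed
  have "simplification M\<^sub>2 ?S'"
    using simplification_image[OF TU] assms(1) T(2) by simp
  then show ?thesis
    unfolding si_contract_good_def
    using three_connected_image[OF assms(2)] has_minor_image[OF assms(3)] by blast
qed

end

context finite_matroid
begin

lemma parallel_contract_sym: "parallel (contract M X) a b \<Longrightarrow> parallel (contract M X) b a"
  unfolding parallel_def by (auto simp: insert_commute)

lemma parallel_contract_in_cl:
  assumes "parallel (contract M X) a b"
  shows "a \<in> cl M (insert b X)"
proof (rule in_clI)
  show "r (insert a (insert b X)) \<le> r (insert b X)"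
    using assms rk_insert_le[of a "insert b X"] unfolding parallel_contract by simp
qed (use assms in \<open>simp add: parallel_contract\<close>)

lemma parallel_contract_trans:
  assumes X: "X \<subseteq> E" and ae: "parallel (contract M X) a e" and eb: "parallel (contract M X) e b"
    and "a \<noteq> b"
  shows "parallel (contract M X) a b"
proof -
  have "b \<in> E"
    using eb unfolding parallel_contract by auto
  then have "insert e X \<subseteq> cl M (insert b X)"
    using parallel_contract_in_cl[OF eb] subset_cl[of "insert b X"] X by blast
  then have "a \<in> cl M (insert b X)"
    using parallel_contract_in_cl[OF ae] cl_subset_clI by blast
  then show ?thesis
    using rk_insert_cl[of a "insert b X"] ae eb \<open>a \<noteq> b\<close> unfolding parallel_contract by auto
qed

text \<open>Extend \<open>T\<^sub>0\<close> to a maximal set of pairwise non-parallel non-loops.\<close>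

lemma simplification_extend:
  assumes X: "X \<subseteq> E" and T\<^sub>0: "T\<^sub>0 \<subseteq> E - X" "\<forall>t\<in>T\<^sub>0. \<not> loop (contract M X) t"
    "\<forall>a\<in>T\<^sub>0. \<forall>b\<in>T\<^sub>0. a \<noteq> b \<longrightarrow> \<not> parallel (contract M X) a b"
  obtains T where "T\<^sub>0 \<subseteq> T" "T \<subseteq> E - X"
    "simplification (contract M X) (restrict (contract M X) T)"
proof -
  let ?M = "contract M X"
  define F where "F = {T. T \<subseteq> E - X \<and> (\<forall>t\<in>T. \<not> loop ?M t) \<and>
                (\<forall>a\<in>T. \<forall>b\<in>T. a \<noteq> b \<longrightarrow> \<not> parallel ?M a b)}"
  have "F \<subseteq> Pow E"
    unfolding F_def by blast
  then have "finite F"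
    using finite_ground by (simp add: finite_subset)
  moreover have "T\<^sub>0 \<in> F"
    unfolding F_def using T\<^sub>0 by simp
  ultimately obtain T where "T \<in> F" "T\<^sub>0 \<subseteq> T" and max: "\<And>T'. T' \<in> F \<Longrightarrow> T \<subseteq> T' \<Longrightarrow> T = T'"
    using finite_has_maximal2[of F T\<^sub>0] by auto
  then have T: "T \<subseteq> E - X" "\<forall>t\<in>T. \<not> loop ?M t"
      "\<forall>a\<in>T. \<forall>b\<in>T. a \<noteq> b \<longrightarrow> \<not> parallel ?M a b"
    unfolding F_def by auto
  have "\<exists>!t. t \<in> T \<and> (t = x \<or> parallel ?M x t)" if x: "x \<in> E - X" "\<not> loop ?M x" for x
  proof -
    have "\<exists>t\<in>T. t = x \<or> parallel ?M x t"
    proof (rule ccontr)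
      assume none: "\<not> (\<exists>t\<in>T. t = x \<or> parallel ?M x t)"
      have "\<not> parallel ?M a b" if "a \<in> insert x T" "b \<in> insert x T" "a \<noteq> b" for a b
        using that none T(3) parallel_contract_sym[of X a b] by auto
      then have "insert x T \<in> F"
        unfolding F_def using T x by auto
      then show False
        using max[of "insert x T"] none by blast
    qed
    moreover have "t = t'"
      if "t \<in> T" "t' \<in> T" "t = x \<or> parallel ?M x t" "t' = x \<or> parallel ?M x t'" for t t'
    proof (rule ccontr)
      assume "t \<noteq> t'"
      then have "parallel ?M t t'"
        using that parallel_contract_sym parallel_contract_trans[OF X, of t x t'] by metis
      then show False
        using that(1,2) \<open>t \<noteq> t'\<close> T(3) by blast
    qed
    ultimately show ?thesis
      by blast
  qed
  then have "simplification ?M (restrict ?M T)"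
    unfolding simplification_restrict_contract_iff[OF T(1)] using T(2) by blast
  then show thesis
    using that T(1) \<open>T\<^sub>0 \<subseteq> T\<close> by blast
qed

lemma simplification_contract_reps:
  assumes X: "X \<subseteq> E" and S: "simplification (contract M X) S"
  obtains T where "S = restrict (contract M X) T" "T \<subseteq> E - X" "ground S = T"
    "\<And>t. t \<in> T \<Longrightarrow> t \<notin> cl M X"
    "\<And>a b. a \<in> T \<Longrightarrow> b \<in> T \<Longrightarrow> a \<noteq> b \<Longrightarrow> r (insert a (insert b X)) = Suc (Suc (r X))"
    "\<And>e. e \<in> E \<Longrightarrow> e \<notin> cl M X \<Longrightarrow> \<exists>t\<in>T. e \<in> cl M (insert t X)"
proof -
  let ?M = "contract M X"
  obtain T where T: "T \<subseteq> E - X" "S = restrict ?M T"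
    using S unfolding simplification_def ground_contract by blast
  note reps = S[unfolded T(2) simplification_restrict_contract_iff[OF T(1)]]
  have ground: "ground S = T"
    using T ground_restrict_contract by auto
  have nonloop: "r (insert t X) = Suc (r X)" if "t \<in> T" for t
    using reps that T(1) unfolding loop_contract by blast
  then have "t \<notin> cl M X" if "t \<in> T" for t
    using that rk_insert_cl by fastforce
  moreover have "r (insert a (insert b X)) = Suc (Suc (r X))"
    if "a \<in> T" "b \<in> T" "a \<noteq> b" for a b
  proof -
    have "\<not> parallel ?M a b"
      using reps that T(1) by blast
    then show ?thesis
      using that T(1) nonloop unfolding parallel_contract by auto
  qed
  moreover have "\<exists>t\<in>T. e \<in> cl M (insert t X)" if e: "e \<in> E" "e \<notin> cl M X" for e
  proof -
    have "e \<notin> X"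
      using e subset_cl[OF X] by blast
    moreover have "\<not> loop ?M e"
      using rk_insert_notin_cl[OF e] unfolding loop_contract by simp
    ultimately obtain t where "t \<in> T" "t = e \<or> parallel ?M e t"
      using reps e by blast
    then show ?thesis
      using e X subset_cl[of "insert e X"] parallel_contract_in_cl by blast
  qed
  ultimately show thesis
    using that T ground by blast
qed

lemma si_contract_good_cl_eq:
  assumes X\<^sub>1: "X\<^sub>1 \<subseteq> E" and X\<^sub>2: "X\<^sub>2 \<subseteq> E" and "X\<^sub>1 \<subseteq> cl M X\<^sub>2" "X\<^sub>2 \<subseteq> cl M X\<^sub>1"
    and good: "si_contract_good M N X\<^sub>1"
  shows "si_contract_good M N X\<^sub>2"
proof -
  obtain S where S: "simplification (contract M X\<^sub>1) S" "three_connected S" "has_minor S N"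
    using good unfolding si_contract_good_def by blast
  obtain T where "ground S = T" "T \<subseteq> E - X\<^sub>1" "\<And>t. t \<in> T \<Longrightarrow> t \<notin> cl M X\<^sub>1"
    using simplification_contract_reps[OF X\<^sub>1 S(1)] by metis
  moreover have same_cl: "cl M X\<^sub>1 = cl M X\<^sub>2"
    using assms cl_subset_clI by blast
  moreover have "r X\<^sub>1 = r X\<^sub>2"
    using assms rk_le_if_subset_cl le_antisym by metis
  ultimately interpret contraction_transfer M X\<^sub>1 X\<^sub>2 "E - cl M X\<^sub>1" id
    using assms rk_Un_eq_if_same_cl[of X\<^sub>1 X\<^sub>2] subset_cl[OF X\<^sub>1] subset_cl[OF X\<^sub>2]
    by unfold_locales auto
  show ?thesis
    using si_contract_good_transfer[OF S] \<open>ground S = T\<close> \<open>T \<subseteq> E - X\<^sub>1\<close>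
      \<open>\<And>t. t \<in> T \<Longrightarrow> t \<notin> cl M X\<^sub>1\<close> by blast
qed

end

locale simple_3_connected = finite_matroid +
  assumes simple: "simple M" and three_connected: "three_connected M"
begin

lemma rk_singleton: "x \<in> E \<Longrightarrow> r {x} = 1"
  using simple rk_indep[of "{x}"] unfolding simple_def by simp

lemma rk_pair: "x \<in> E \<Longrightarrow> z \<in> E \<Longrightarrow> x \<noteq> z \<Longrightarrow> r {x, z} = 2"
  using simple rk_indep[of "{x, z}"] unfolding simple_def by simp

lemma notin_cl_singleton: "x \<in> E \<Longrightarrow> z \<in> E \<Longrightarrow> x \<noteq> z \<Longrightarrow> x \<notin> cl M {z}"
  using rk_pair[of x z] rk_singleton[of z] rk_insert_cl[of x "{z}"] by auto

lemma line_subset_cl_pair: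
  assumes "L \<subseteq> E" "r L = 2" "a \<in> L" "b \<in> L" "a \<noteq> b"
  shows "L \<subseteq> cl M {a, b}"
proof
  fix e
  assume "e \<in> L"
  then have "r (insert e {a, b}) \<le> r {a, b}"
    using assms rk_mono[of "insert e {a, b}" L] rk_pair[of a b] by (simp add: subset_iff)
  then show "e \<in> cl M {a, b}"
    using \<open>e \<in> L\<close> assms(1) in_clI by blast
qed

lemma rk_add_rk_compl_ge:
  assumes "X \<subseteq> E"
  shows "1 \<le> card X \<Longrightarrow> 1 \<le> card (E - X) \<Longrightarrow> r E + 1 \<le> r X + r (E - X)"
    and "2 \<le> card X \<Longrightarrow> 2 \<le> card (E - X) \<Longrightarrow> r E + 2 \<le> r X + r (E - X)"
  using three_connected assms unfolding three_connected_def tutte_sep_def by force+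

lemma rk_compl_ge_3:
  assumes Q: "Q \<subseteq> E" "2 \<le> card Q" "r Q < r E"
  shows "3 \<le> r (E - Q)"
proof (rule ccontr)
  assume "\<not> 3 \<le> r (E - Q)"
  have "E - Q \<noteq> {}"
    using Q by auto
  then have "1 \<le> card (E - Q)"
    using finite_ground by (simp add: Suc_leI card_gt_0_iff)
  moreover have "r (E - Q) \<le> 1" if "card (E - Q) \<le> 1"
    using card_le_rk_ground[of "E - Q"] that by simp
  ultimately show False
    using rk_add_rk_compl_ge[OF Q(1)] Q(2,3) \<open>\<not> 3 \<le> r (E - Q)\<close>
    by (cases "2 \<le> card (E - Q)") auto
qed

end

lemma card_ge_2_ex_neq: "2 \<le> card A \<Longrightarrow> \<exists>a\<in>A. a \<noteq> x"
  by (metis card_le_Suc0_iff_eq insertI1 not_less_eq_eq numeral_2_eq_2 card.infinite zero_le)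

lemma card_ge_3_ex_neq2: "3 \<le> card A \<Longrightarrow> \<exists>a\<in>A. a \<noteq> x \<and> a \<noteq> z"
proof (rule ccontr)
  assume "3 \<le> card A" "\<not> (\<exists>a\<in>A. a \<noteq> x \<and> a \<noteq> z)"
  then have "card A \<le> card {x, z}"
    by (intro card_mono) auto
  also have "\<dots> \<le> 2"
    by (simp add: card_insert_if)
  finally show False
    using \<open>3 \<le> card A\<close> by simp
qed

text \<open>\<open>Twy\<close> is the ground set of a 3-connected simplification \<open>Swy\<close> of \<open>M / {w, y}\<close>, and
  \<open>Ty \<supseteq> Twy \<union> {w}\<close> that of a simplification \<open>Sy\<close> of \<open>M / y\<close>.\<close>

locale vertical_pair = simple_3_connected +
  fixes y w :: 'a and Ty Twy :: "'a set"
  assumes yE: "y \<in> E" and wE: "w \<in> E" and w_neq_y: "w \<noteq> y"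
    and Twy: "Twy \<subseteq> E - {w, y}" and Twy_notin_cl: "\<And>t. t \<in> Twy \<Longrightarrow> t \<notin> cl M {w, y}"
    and Twy_covers: "\<And>e. e \<in> E \<Longrightarrow> e \<notin> cl M {w, y} \<Longrightarrow> \<exists>t\<in>Twy. e \<in> cl M {t, w, y}"
    and three_connected_Swy: "three_connected (restrict (contract M {w, y}) Twy)"
    and Ty: "Ty \<subseteq> E - {y}" and w_in_Ty: "w \<in> Ty" and Twy_subset_Ty: "Twy \<subseteq> Ty"
    and rk_Ty_pair_y: "\<And>a b. a \<in> Ty \<Longrightarrow> b \<in> Ty \<Longrightarrow> a \<noteq> b \<Longrightarrow> r {a, b, y} = 3"
    and Ty_covers: "\<And>e. e \<in> E \<Longrightarrow> e \<noteq> y \<Longrightarrow> \<exists>t\<in>Ty. e \<in> cl M {t, y}"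
begin

abbreviation "Swy \<equiv> restrict (contract M {w, y}) Twy"
abbreviation "Sy \<equiv> restrict (contract M {y}) Ty"

lemma wyE: "{w, y} \<subseteq> E"
  using wE yE by blast

lemma rk_wy: "r {w, y} = 2"
  using rk_pair[OF wE yE w_neq_y] .

lemma Ty_subset_E: "Ty \<subseteq> E"
  using Ty by blast

lemma finite_Ty: "finite Ty"
  using Ty_subset_E finite_ground finite_subset by blast

lemma finite_Twy: "finite Twy"
  using Twy finite_ground finite_subset by blast

lemma ground_Swy: "ground Swy = Twy"
  using ground_restrict_contract Twy by auto

lemma ground_Sy: "ground Sy = Ty"
  using ground_restrict_contract Ty by auto

lemma rk_Swy: "A \<subseteq> Twy \<Longrightarrow> rk Swy A = r (A \<union> {w, y}) - 2"
  using rk_restrict_contract[OF wyE _ Twy] rk_wy by simp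

lemma rk_Sy: "A \<subseteq> Ty \<Longrightarrow> rk Sy A = r (insert y A) - 1"
  using rk_restrict_contract[of "{y}" A Ty] Ty yE rk_singleton[OF yE] by simp

lemma cl_wy_subset: "w \<in> F \<Longrightarrow> y \<in> F \<Longrightarrow> cl M F = F \<Longrightarrow> cl M {w, y} \<subseteq> F"
  using cl_mono[of "{w, y}" F] by blast

lemma flat_subset_cl_Twy:
  assumes F: "w \<in> F" "y \<in> F" "cl M F = F"
  shows "F \<subseteq> cl M ((Twy \<inter> F) \<union> {w, y})"
proof
  fix e
  assume e: "e \<in> F"
  then have eE: "e \<in> E"
    using F(3) cl_subset_ground by blast
  show "e \<in> cl M ((Twy \<inter> F) \<union> {w, y})"
  proof (cases "e \<in> cl M {w, y}")
    case True
    then show ?thesis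
      using cl_mono[of "{w, y}" "(Twy \<inter> F) \<union> {w, y}"] by blast
  next
    case False
    then obtain t where t: "t \<in> Twy" "e \<in> cl M {t, w, y}"
      using Twy_covers eE by blast
    have "t \<in> cl M (insert e {w, y})"
      using cl_exchange[OF wyE _ Twy_notin_cl[OF t(1)] eE False] t Twy by auto
    moreover have "cl M {e, w, y} \<subseteq> F"
      using e F cl_mono[of "{e, w, y}" F] by auto
    ultimately have "t \<in> Twy \<inter> F"
      using t(1) by auto
    then show ?thesis
      using t cl_mono[of "{t, w, y}" "(Twy \<inter> F) \<union> {w, y}"] by blast
  qed
qed

lemma compl_flat_subset_cl_Twy:
  assumes F: "w \<in> F" "y \<in> F" "cl M F = F"
  shows "E - F \<subseteq> cl M ((Twy - F) \<union> {w, y})"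
proof
  fix e
  assume e: "e \<in> E - F"
  then have "e \<notin> cl M {w, y}"
    using cl_wy_subset[OF F] by blast
  then obtain t where t: "t \<in> Twy" "e \<in> cl M {t, w, y}"
    using Twy_covers e by blast
  have "t \<notin> F"
  proof
    assume "t \<in> F"
    then have "cl M {t, w, y} \<subseteq> F"
      using F cl_mono[of "{t, w, y}" F] by auto
    then show False
      using t e by blast
  qed
  then show "e \<in> cl M ((Twy - F) \<union> {w, y})"
    using t cl_mono[of "{t, w, y}" "(Twy - F) \<union> {w, y}"] by blast
qed

lemma flat_subset_cl_Ty:
  assumes P: "y \<in> P" "cl M P = P"
  shows "P \<subseteq> cl M (insert y (Ty \<inter> P))"
proof
  fix e
  assume e: "e \<in> P"
  then have eE: "e \<in> E"
    using P(2) cl_subset_ground by blast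
  show "e \<in> cl M (insert y (Ty \<inter> P))"
  proof (cases "e = y")
    case True
    then show ?thesis
      using subset_cl[of "insert y (Ty \<inter> P)"] Ty_subset_E yE by blast
  next
    case False
    then obtain t where t: "t \<in> Ty" "e \<in> cl M {t, y}"
      using Ty_covers eE by blast
    have tE: "t \<in> E" "t \<noteq> y"
      using t Ty by auto
    have "t \<in> cl M (insert e {y})"
      using cl_exchange[of "{y}" t e] notin_cl_singleton[OF tE(1) yE tE(2)]
        notin_cl_singleton[OF eE yE False] yE tE(1) eE t(2) by (simp add: insert_commute)
    moreover have "cl M {e, y} \<subseteq> P"
      using e P cl_mono[of "{e, y}" P] by auto
    ultimately have "t \<in> Ty \<inter> P"
      using t(1) by auto
    then show ?thesis
      using t cl_mono[of "{t, y}" "insert y (Ty \<inter> P)"] by blast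
  qed
qed

lemma compl_flat_subset_cl_Ty:
  assumes P: "y \<in> P" "cl M P = P"
  shows "E - P \<subseteq> cl M (insert y (Ty - P))"
proof
  fix e
  assume e: "e \<in> E - P"
  then obtain t where t: "t \<in> Ty" "e \<in> cl M {t, y}"
    using Ty_covers P(1) by blast
  have "t \<notin> P"
  proof
    assume "t \<in> P"
    then have "cl M {t, y} \<subseteq> P"
      using P cl_mono[of "{t, y}" P] by auto
    then show False
      using t e by blast
  qed
  then show "e \<in> cl M (insert y (Ty - P))"
    using t cl_mono[of "{t, y}" "insert y (Ty - P)"] by blast
qed

lemma Ty_sides_cover:
  assumes "A \<subseteq> Ty"
  shows "E \<subseteq> cl M (insert y A) \<union> cl M (insert y (Ty - A))"
proof
  fix e
  assume e: "e \<in> E"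
  show "e \<in> cl M (insert y A) \<union> cl M (insert y (Ty - A))"
  proof (cases "e = y")
    case True
    then show ?thesis
      using subset_cl[of "insert y A"] assms Ty_subset_E yE by blast
  next
    case False
    then obtain t where "t \<in> Ty" "e \<in> cl M {t, y}"
      using Ty_covers e by blast
    then show ?thesis
      using cl_mono[of "{t, y}" "insert y A"] cl_mono[of "{t, y}" "insert y (Ty - A)"] by blast
  qed
qed

lemma rk_insert_y_Ty: "r (insert y Ty) = r E"
proof -
  have "E \<subseteq> cl M (insert y Ty)"
    using Ty_sides_cover[of Ty] cl_mono[of "{y}" "insert y Ty"] by auto
  then show ?thesis
    using rk_le_if_subset_cl rk_le_rk_ground antisym by metis
qed

lemma rk_insert_y_ge_3:
  assumes "A \<subseteq> Ty" "2 \<le> card A"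
  shows "3 \<le> r (insert y A)"
proof -
  obtain a where "a \<in> A"
    using assms(2) by fastforce
  moreover obtain b where "b \<in> A" "b \<noteq> a"
    using card_ge_2_ex_neq[OF assms(2)] by blast
  ultimately have "r {a, b, y} = 3"
    using assms(1) rk_Ty_pair_y[of a b] by auto
  then show ?thesis
    using \<open>a \<in> A\<close> \<open>b \<in> A\<close> rk_mono[of "{a, b, y}" "insert y A"] by auto
qed

lemma Ty_notin_cl_wy: "a \<in> Ty \<Longrightarrow> a \<noteq> w \<Longrightarrow> a \<notin> cl M {w, y}"
  using rk_Ty_pair_y[OF _ w_in_Ty] rk_insert_cl[of a "{w, y}"] rk_wy by (auto simp: insert_commute)

text \<open>The 3-connectivity of \<open>Swy\<close>, read as rank inequalities in \<open>M\<close>.\<close>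

lemma rk_Twy_sides_ge:
  assumes "X \<subseteq> Twy" "k = 1 \<or> k = 2" "k \<le> card X" "k \<le> card (Twy - X)"
  shows "r E + k + 2 \<le> r (X \<union> {w, y}) + r ((Twy - X) \<union> {w, y})"
proof -
  have "\<not> tutte_sep Swy k X"
    using three_connected_Swy assms(2) unfolding three_connected_def by blast
  then have "rk Swy Twy + k \<le> rk Swy X + rk Swy (Twy - X)"
    using assms unfolding tutte_sep_def ground_Swy by auto
  moreover have "r (Twy \<union> {w, y}) = r E"
  proof -
    have "E \<subseteq> cl M (Twy \<union> {w, y})"
      using compl_flat_subset_cl_Twy[of "cl M {w, y}"] cl_idem[of "{w, y}"]
        subset_cl[OF wyE] cl_mono[of "{w, y}" "Twy \<union> {w, y}"] cl_mono[of "(Twy - cl M {w, y}) \<union> {w, y}" "Twy \<union> {w, y}"]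
      by blast
    then show ?thesis
      using rk_le_if_subset_cl rk_le_rk_ground antisym by metis
  qed
  moreover have "2 \<le> r (X \<union> {w, y})" "2 \<le> r ((Twy - X) \<union> {w, y})"
    using rk_wy rk_mono[of "{w, y}"] by fastforce+
  ultimately show ?thesis
    using rk_Swy[OF assms(1)] rk_Swy[of "Twy - X"] rk_Swy[of Twy] by fastforce
qed

text \<open>A 2-separation \<open>(A, Ty - A)\<close> of \<open>Sy\<close> with both sides of size at least 2, stated with
  ranks of \<open>M\<close> (the rank of \<open>X\<close> in \<open>M / y\<close> is \<open>r (insert y X) - 1\<close>).\<close>

definition vert_sep :: "'a set \<Rightarrow> bool" where
  "vert_sep A \<longleftrightarrow> A \<subseteq> Ty \<and> 2 \<le> card A \<and> 2 \<le> card (Ty - A) \<and>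
     r (insert y A) + r (insert y (Ty - A)) \<le> r E + 2"

lemma vert_sep_compl: "vert_sep A \<Longrightarrow> vert_sep (Ty - A)"
  unfolding vert_sep_def by (simp add: double_diff add.commute)

lemma vert_sep_rk_bounds:
  assumes "vert_sep A"
  shows "3 \<le> r (insert y A)" "r (insert y A) + 1 \<le> r E" "r (insert y (Ty - A)) + 1 \<le> r E"
proof -
  have "A \<subseteq> Ty" "2 \<le> card A" "2 \<le> card (Ty - A)"
    using assms unfolding vert_sep_def by auto
  then have "3 \<le> r (insert y A)" "3 \<le> r (insert y (Ty - A))"
    using rk_insert_y_ge_3[of A] rk_insert_y_ge_3[of "Ty - A"] by simp_all
  then show "3 \<le> r (insert y A)" "r (insert y A) + 1 \<le> r E" "r (insert y (Ty - A)) + 1 \<le> r E"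
    using assms unfolding vert_sep_def by linarith+
qed

lemma vert_sep_w_notin_cl_compl:
  assumes sep: "vert_sep A" and "w \<in> A"
  shows "w \<notin> cl M (insert y (Ty - A))"
proof
  assume w_cl: "w \<in> cl M (insert y (Ty - A))"
  define F where "F = cl M (insert y A)"
  have A: "A \<subseteq> Ty" "insert y A \<subseteq> F"
  proof -
    show "A \<subseteq> Ty"
      using sep unfolding vert_sep_def by blast
    then show "insert y A \<subseteq> F"
      unfolding F_def using Ty_subset_E yE by (intro subset_cl) blast
  qed
  have F: "w \<in> F" "y \<in> F" "cl M F = F"
    using A(2) \<open>w \<in> A\<close> cl_idem unfolding F_def by blast+
  obtain a where a: "a \<in> A" "a \<noteq> w"
    using card_ge_2_ex_neq[of A w] sep unfolding vert_sep_def by blast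
  have "Twy \<inter> F \<noteq> {}"
  proof
    assume "Twy \<inter> F = {}"
    have "a \<in> cl M ((Twy \<inter> F) \<union> {w, y})"
      using flat_subset_cl_Twy[OF F] a(1) A(2) by blast
    then have "a \<in> cl M {w, y}"
      using \<open>Twy \<inter> F = {}\<close> by simp
    then show False
      using Ty_notin_cl_wy a A by blast
  qed
  then have "1 \<le> card (Twy \<inter> F)"
    using finite_Twy by (simp add: Suc_le_eq card_gt_0_iff)
  have "Twy - F \<noteq> {}"
  proof
    assume "Twy - F = {}"
    then have "E - F \<subseteq> cl M {w, y}"
      using compl_flat_subset_cl_Twy[OF F] by (simp only: Un_empty_left)
    then have "E \<subseteq> F"
      using cl_wy_subset[OF F] by blast
    then have "r E \<le> r (insert y A)"
      unfolding F_def by (rule rk_le_if_subset_cl)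
    then show False
      using vert_sep_rk_bounds[OF sep] by simp
  qed
  moreover have "Twy - (Twy \<inter> F) = Twy - F"
    by blast
  ultimately have "1 \<le> card (Twy - (Twy \<inter> F))"
    using finite_Twy by (simp add: Suc_le_eq card_gt_0_iff)
  have "(Twy \<inter> F) \<union> {w, y} \<subseteq> F"
    using F(1,2) by blast
  then have "r ((Twy \<inter> F) \<union> {w, y}) \<le> r (insert y A)"
    unfolding F_def by (rule rk_le_if_subset_cl)
  moreover have "(Twy - (Twy \<inter> F)) \<union> {w, y} \<subseteq> cl M (insert y (Ty - A))"
  proof -
    have "Twy - (Twy \<inter> F) \<subseteq> insert y (Ty - A)"
      using Twy_subset_Ty A by blast
    moreover have "insert y (Ty - A) \<subseteq> cl M (insert y (Ty - A))"
      using Ty_subset_E yE by (intro subset_cl) blast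
    ultimately show ?thesis
      using w_cl by blast
  qed
  then have "r ((Twy - (Twy \<inter> F)) \<union> {w, y}) \<le> r (insert y (Ty - A))"
    by (rule rk_le_if_subset_cl)
  moreover have "r E + 1 + 2 \<le> r ((Twy \<inter> F) \<union> {w, y}) + r ((Twy - (Twy \<inter> F)) \<union> {w, y})"
    using \<open>1 \<le> card (Twy \<inter> F)\<close> \<open>1 \<le> card (Twy - (Twy \<inter> F))\<close>
    by (intro rk_Twy_sides_ge) auto
  ultimately show False
    using sep unfolding vert_sep_def by linarith
qed

text \<open>If the side containing \<open>w\<close> has rank at least 4 together with \<open>y\<close>, replace it by the
  representatives in the flat spanned by \<open>w\<close>, \<open>y\<close> and the (at most one) element of \<open>Twy\<close>
  outside \<open>cl (insert y A)\<close>.\<close>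

lemma vert_sep_rk_3:
  assumes sep: "vert_sep A" and "w \<in> A"
  obtains A' where "vert_sep A'" "w \<in> A'" "r (insert y A') = 3"
proof (cases "r (insert y A) = 3")
  case False
  define F where "F = cl M (insert y A)"
  have A: "A \<subseteq> Ty" "insert y A \<subseteq> F"
  proof -
    show "A \<subseteq> Ty"
      using sep unfolding vert_sep_def by blast
    then show "insert y A \<subseteq> F"
      unfolding F_def using Ty_subset_E yE by (intro subset_cl) blast
  qed
  have F: "w \<in> F" "y \<in> F" "cl M F = F"
    using A(2) \<open>w \<in> A\<close> cl_idem unfolding F_def by blast+
  have bounds: "4 \<le> r (insert y A)" "r (insert y A) + 1 \<le> r E" "r (insert y (Ty - A)) + 1 \<le> r E"
    using False vert_sep_rk_bounds[OF sep] by auto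
  have fin: "finite (Twy \<inter> F)" "finite ((Twy - F) \<union> {w, y})"
    using finite_Twy by auto
  have in_F: "r ((Twy \<inter> F) \<union> {w, y}) \<le> r (insert y A)"
    using rk_le_if_subset_cl[of "(Twy \<inter> F) \<union> {w, y}" "insert y A"] F unfolding F_def by auto
  have "2 \<le> card (Twy \<inter> F)"
  proof (rule ccontr)
    assume "\<not> 2 \<le> card (Twy \<inter> F)"
    then have "card ((Twy \<inter> F) \<union> {w, y}) \<le> 3"
      using card_Un_le[of "Twy \<inter> F" "{w, y}"] w_neq_y by simp
    moreover have "r (insert y A) \<le> r ((Twy \<inter> F) \<union> {w, y})"
      using flat_subset_cl_Twy[OF F] A rk_le_if_subset_cl by blast
    ultimately show False
      using bounds card_le_rk_ground[of "(Twy \<inter> F) \<union> {w, y}"] Twy wyE by auto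
  qed
  have "card (Twy - F) \<le> 1"
  proof (rule ccontr)
    assume "\<not> card (Twy - F) \<le> 1"
    have "Twy - F \<subseteq> Ty - A"
      using Twy_subset_Ty A by blast
    then have "r ((Twy - F) \<union> {w, y}) \<le> r (insert w (cl M (insert y (Ty - A))))"
      using subset_cl[of "insert y (Ty - A)"] Ty_subset_E yE by (intro rk_mono) auto
    also have "\<dots> \<le> Suc (r (insert y (Ty - A)))"
      using rk_insert_le rk_cl by metis
    finally have "r ((Twy - F) \<union> {w, y}) \<le> Suc (r (insert y (Ty - A)))" .
    moreover have "Twy - (Twy \<inter> F) = Twy - F"
      by blast
    then have "r E + 2 + 2 \<le> r ((Twy \<inter> F) \<union> {w, y}) + r ((Twy - F) \<union> {w, y})"
      using rk_Twy_sides_ge[of "Twy \<inter> F" 2] \<open>2 \<le> card (Twy \<inter> F)\<close> \<open>\<not> card (Twy - F) \<le> 1\<close>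
      by simp
    ultimately show False
      using in_F sep unfolding vert_sep_def by linarith
  qed
  define P where "P = cl M ((Twy - F) \<union> {w, y})"
  have P: "y \<in> P" "cl M P = P" "w \<in> P"
    using subset_cl[of "(Twy - F) \<union> {w, y}"] Twy wyE cl_idem unfolding P_def by auto
  have rk_P: "r P \<le> 3"
  proof -
    have "r P \<le> card ((Twy - F) \<union> {w, y})"
      unfolding P_def rk_cl using Twy wyE by (intro card_le_rk_ground) auto
    also have "\<dots> \<le> card (Twy - F) + 2"
      using card_Un_le[of "Twy - F" "{w, y}"] w_neq_y by simp
    finally show ?thesis
      using \<open>card (Twy - F) \<le> 1\<close> by simp
  qed
  have outside_F: "E - F \<subseteq> P"
    using compl_flat_subset_cl_Twy[OF F] unfolding P_def .
  define A' where "A' = Ty \<inter> P"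
  have "w \<in> A'"
    using w_in_Ty P unfolding A'_def by blast
  have "2 \<le> card A'"
  proof (rule ccontr)
    assume "\<not> 2 \<le> card A'"
    then have "A' = {w}"
      using \<open>w \<in> A'\<close> finite_Ty card_le_Suc0_iff_eq[of A'] unfolding A'_def by fastforce
    then have "E - F \<subseteq> cl M {w, y}"
      using outside_F flat_subset_cl_Ty[OF P(1,2)] unfolding A'_def by (simp add: insert_commute)
    then have "E \<subseteq> F"
      using cl_wy_subset[OF F] by blast
    then show False
      using rk_le_if_subset_cl[of E "insert y A"] bounds unfolding F_def by simp
  qed
  have "r (insert y A') = 3"
    using rk_insert_y_ge_3[of A'] \<open>2 \<le> card A'\<close> rk_P P rk_mono[of "insert y A'" P]
    unfolding A'_def by fastforce
  moreover have "2 \<le> card (Ty - A')"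
  proof (rule ccontr)
    assume "\<not> 2 \<le> card (Ty - A')"
    moreover have "Ty - A' = Ty - P"
      unfolding A'_def by blast
    ultimately have "card (insert y (Ty - P)) \<le> 2"
      using card_insert_le_m1[of 2 "Ty - P" y] by simp
    moreover have "insert y (Ty - P) \<subseteq> E"
      using Ty_subset_E yE by blast
    ultimately have "r (E - P) \<le> 2"
      using rk_le_if_subset_cl[OF compl_flat_subset_cl_Ty[OF P(1,2)]]
        card_le_rk_ground[of "insert y (Ty - P)"] by linarith
    moreover have "{w, y} \<subseteq> P" "P \<subseteq> E"
      using P cl_subset_ground by auto
    then have "2 \<le> card P"
      using card_mono[of P "{w, y}"] finite_subset[OF _ finite_ground] w_neq_y by auto
    ultimately show False
      using rk_compl_ge_3[of P] rk_P bounds \<open>P \<subseteq> E\<close> by linarith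
  qed
  moreover have "r (insert y (Ty - A')) \<le> r (insert y A)"
    using outside_F A Ty_subset_E unfolding A'_def F_def by (intro rk_le_if_subset_cl) auto
  ultimately have "vert_sep A'"
    using \<open>2 \<le> card A'\<close> bounds unfolding vert_sep_def A'_def by auto
  then show thesis
    using that \<open>w \<in> A'\<close> \<open>r (insert y A') = 3\<close> by blast
qed (use assms that in blast)

lemma hyperplane_of_vert_sep:
  assumes sep: "vert_sep A" and "w \<in> A" and rk_3: "r (insert y A) = 3"
  defines "H \<equiv> cl M (insert y (Ty - A))"
  shows "cl M H = H" "y \<in> H" "w \<notin> H" "r H + 1 = r E" "r (E - H) = 3"
proof -
  have A: "A \<subseteq> Ty"
    using sep unfolding vert_sep_def by blast
  have B: "insert y (Ty - A) \<subseteq> E"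
    using Ty_subset_E yE by blast
  show "cl M H = H"
    unfolding H_def by (rule cl_idem)
  show "y \<in> H"
    unfolding H_def using subset_cl[OF B] by blast
  show "w \<notin> H"
    unfolding H_def using vert_sep_w_notin_cl_compl[OF sep \<open>w \<in> A\<close>] .
  have H: "H \<subseteq> E" "2 \<le> card H"
  proof -
    show "H \<subseteq> E"
      unfolding H_def by (rule cl_subset_ground)
    have "card (insert y (Ty - A)) \<le> card H"
      unfolding H_def using subset_cl[OF B] finite_subset[OF cl_subset_ground finite_ground]
      by (rule card_mono[rotated])
    moreover have "y \<notin> Ty - A"
      using Ty by blast
    then have "card (insert y (Ty - A)) = Suc (card (Ty - A))"
      using finite_Ty by simp
    ultimately show "2 \<le> card H"
      using sep unfolding vert_sep_def by linarith
  qed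
  have "r H + 1 \<le> r E"
    using sep rk_3 rk_cl unfolding H_def vert_sep_def by simp
  moreover have "r (E - H) \<le> 3"
    using Ty_sides_cover[OF A] rk_le_if_subset_cl[of "E - H" "insert y A"] rk_3 unfolding H_def by auto
  moreover have "E - H \<noteq> {}"
    using \<open>w \<notin> H\<close> wE by blast
  then have "1 \<le> card (E - H)"
    using finite_ground by (simp add: Suc_le_eq card_gt_0_iff)
  moreover have "r (E - H) \<le> 1" if "card (E - H) \<le> 1"
    using that card_le_rk_ground[of "E - H"] by simp
  ultimately show "r H + 1 = r E" "r (E - H) = 3"
    using rk_add_rk_compl_ge[OF H(1)] H(2) rk_compl_ge_3[OF H] by (cases "2 \<le> card (E - H)"; force)+
qed

lemma singleton_side_spans:
  assumes "A \<subseteq> Ty" "card A = 1" "Ty - A \<noteq> {}"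
  shows "r (insert y (Ty - A)) = r E"
proof (rule ccontr)
  assume "r (insert y (Ty - A)) \<noteq> r E"
  then have "r (insert y (Ty - A)) < r E"
    using rk_le_rk_ground le_neq_implies_less by blast
  define Q where "Q = cl M (insert y (Ty - A))"
  have "insert y (Ty - A) \<subseteq> E"
    using Ty_subset_E yE by blast
  then have "insert y (Ty - A) \<subseteq> Q" "Q \<subseteq> E"
    unfolding Q_def using subset_cl cl_subset_ground by blast+
  moreover have "y \<notin> Ty - A" "0 < card (Ty - A)"
    using assms(3) Ty finite_Ty by (auto simp: card_gt_0_iff)
  then have "2 \<le> card (insert y (Ty - A))"
    using finite_Ty by simp
  ultimately have "2 \<le> card Q"
    using card_mono[of Q "insert y (Ty - A)"] finite_subset[OF _ finite_ground] by fastforce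
  moreover have "r Q < r E"
    unfolding Q_def rk_cl by fact
  moreover obtain a where a: "A = {a}"
    using assms(2) card_1_singletonE by blast
  then have "r (insert y A) = 2"
    using assms(1) Ty rk_pair[OF yE, of a] by (auto simp: insert_commute)
  then have "r (E - Q) \<le> 2"
    using Ty_sides_cover[OF assms(1)] rk_le_if_subset_cl[of "E - Q" "insert y A"] unfolding Q_def by auto
  ultimately show False
    using rk_compl_ge_3[of Q] \<open>Q \<subseteq> E\<close> by linarith
qed

lemma vert_sep_exists:
  assumes "\<not> three_connected Sy"
  obtains A where "vert_sep A" "w \<in> A"
proof -
  obtain X k where k: "k = 1 \<or> k = 2" and "tutte_sep Sy k X"
    using assms unfolding three_connected_def by blast
  then have X: "X \<subseteq> Ty" "k \<le> card X" "k \<le> card (Ty - X)"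
    and "rk Sy X + rk Sy (Ty - X) < rk Sy Ty + k"
    unfolding tutte_sep_def ground_Sy by auto
  moreover have pos: "1 \<le> r (insert y Z)" for Z
    using rk_mono[of "{y}" "insert y Z"] rk_singleton[OF yE] by simp
  ultimately have sides: "r (insert y X) + r (insert y (Ty - X)) < r E + 1 + k"
    using rk_Sy[OF X(1)] rk_Sy[OF Diff_subset[of Ty X]] rk_Sy[OF order_refl] rk_insert_y_Ty
      pos[of X] pos[of "Ty - X"] pos[of Ty] by linarith
  have rk_singleton_y: "r (insert y Z) = 2" if Z: "Z \<subseteq> Ty" "card Z = 1" for Z
  proof -
    obtain a where "Z = {a}"
      using Z(2) card_1_singletonE by blast
    moreover have "a \<in> E" "y \<noteq> a"
      using Z(1) Ty \<open>Z = {a}\<close> by auto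
    ultimately show ?thesis
      using rk_pair[OF yE] by simp
  qed
  have "2 \<le> card X"
  proof (rule ccontr)
    assume "\<not> 2 \<le> card X"
    then have "card X = 1" "Ty - X \<noteq> {}"
      using X k by auto
    then show False
      using singleton_side_spans[OF X(1)] rk_singleton_y[OF X(1)] sides k X by auto
  qed
  moreover have "2 \<le> card (Ty - X)"
  proof (rule ccontr)
    assume "\<not> 2 \<le> card (Ty - X)"
    then have "card (Ty - X) = 1" "Ty - (Ty - X) \<noteq> {}"
      using X k \<open>2 \<le> card X\<close> by (auto simp: double_diff)
    then show False
      using singleton_side_spans[of "Ty - X"] rk_singleton_y[of "Ty - X"] sides k X
      by (auto simp: double_diff)
  qed
  ultimately have "vert_sep X"
    unfolding vert_sep_def using X(1) sides k by auto
  then show thesis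
    using that vert_sep_compl w_in_Ty by (cases "w \<in> X") blast+
qed

lemma hyperplane_avoiding_w:
  assumes "\<not> three_connected Sy"
  obtains H where "H \<subseteq> E" "cl M H = H" "y \<in> H" "w \<notin> H" "r H + 1 = r E" "r (E - H) = 3"
proof -
  obtain A where "vert_sep A" "w \<in> A"
    using vert_sep_exists[OF assms] .
  then obtain A' where "vert_sep A'" "w \<in> A'" "r (insert y A') = 3"
    by (rule vert_sep_rk_3)
  then show thesis
    using that hyperplane_of_vert_sep cl_subset_ground by metis
qed

lemma has_minor_Sy:
  assumes "has_minor Swy N"
  shows "has_minor Sy N"
proof -
  obtain M' where "is_minor M' Swy" and iso: "iso N M'"
    using assms unfolding has_minor_def by blast
  then obtain C D where CD: "C \<subseteq> Twy" "D \<subseteq> Twy" "C \<inter> D = {}"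
    and M': "M' = delete (contract Swy C) D"
    unfolding is_minor_def ground_Swy by blast
  define C' where "C' = insert w C"
  define D' where "D' = D \<union> (Ty - Twy - {w})"
  have "w \<notin> Twy"
    using Twy by blast
  then have ground_eq: "Twy - C - D = Ty - C' - D'"
    using Twy_subset_Ty CD(1,2) unfolding C'_def D'_def by blast
  have indep_shift: "rk Swy (I \<union> C) = card I + rk Swy C \<longleftrightarrow> rk Sy (I \<union> C') = card I + rk Sy C'"
    if "I \<subseteq> Twy - C - D" for I
  proof -
    have "insert y (I \<union> C') = I \<union> C \<union> {w, y}" "insert y C' = C \<union> {w, y}"
      unfolding C'_def by auto
    moreover have "2 \<le> r (I \<union> C \<union> {w, y})" "2 \<le> r (C \<union> {w, y})"
      using rk_wy rk_mono[of "{w, y}" "I \<union> C \<union> {w, y}"] rk_mono[of "{w, y}" "C \<union> {w, y}"] by auto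
    moreover have "I \<union> C \<subseteq> Twy" "I \<union> C' \<subseteq> Ty" "C' \<subseteq> Ty"
      using that CD(1) Twy_subset_Ty w_in_Ty unfolding C'_def by auto
    ultimately show ?thesis
      using rk_Swy[of "I \<union> C"] rk_Swy[OF CD(1)] rk_Sy[of "I \<union> C'"] rk_Sy[of C'] by auto
  qed
  have "M' = delete (contract Sy C') D'"
  proof (rule matroid.equality)
    show "ground M' = ground (delete (contract Sy C') D')"
      unfolding M' ground_delete_contract ground_Swy ground_Sy ground_eq ..
    show "indep M' = indep (delete (contract Sy C') D')"
    proof
      fix I
      show "indep M' I = indep (delete (contract Sy C') D') I"
        unfolding M' indep_delete_contract ground_Swy ground_Sy ground_eq[symmetric]
        using indep_shift by blast
    qed
  qed simp
  moreover have "C' \<subseteq> Ty" "D' \<subseteq> Ty" "C' \<inter> D' = {}"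
    using CD Twy_subset_Ty w_in_Ty \<open>w \<notin> Twy\<close> unfolding C'_def D'_def by auto
  then have "is_minor (delete (contract Sy C') D') Sy"
    unfolding is_minor_def ground_Sy by blast
  ultimately show ?thesis
    using iso unfolding has_minor_def by blast
qed

end

context simple_3_connected
begin

lemma rk_pair_y_eq_3:
  assumes E: "{a, b, w, y} \<subseteq> E" and "a \<noteq> b" and b: "b \<notin> cl M {w, y}"
    and a: "a = w \<or> r (insert a (insert b {w, y})) = Suc (Suc (r {w, y}))" and "w \<noteq> y"
  shows "r {a, b, y} = 3"
proof -
  have wy: "r {w, y} = 2"
    using rk_pair E \<open>w \<noteq> y\<close> by simp
  have "card {a, b, y} \<le> 3"
    by (auto simp: card_insert_if)
  then have "r {a, b, y} \<le> 3"
    using card_le_rk_ground[of "{a, b, y}"] E by simp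
  moreover have "3 \<le> r {a, b, y}"
    using a
  proof
    assume "a = w"
    then show ?thesis
      using rk_insert_notin_cl[of b "{w, y}"] b E wy by (simp add: insert_commute)
  next
    assume "r (insert a (insert b {w, y})) = Suc (Suc (r {w, y}))"
    moreover have "r (insert w {a, b, y}) \<le> Suc (r {a, b, y})"
      by (rule rk_insert_le)
    ultimately show ?thesis
      using wy by (simp add: insert_commute)
  qed
  ultimately show ?thesis
    by simp
qed

lemma simplification_contract_y_extend:
  assumes wy: "w \<in> E" "y \<in> E" "w \<noteq> y" and T: "T \<subseteq> E - {w, y}"
    and T_notin_cl: "\<And>t. t \<in> T \<Longrightarrow> t \<notin> cl M {w, y}"
    and T_indep: "\<And>a b. a \<in> T \<Longrightarrow> b \<in> T \<Longrightarrow> a \<noteq> b \<Longrightarrow>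
      r (insert a (insert b {w, y})) = Suc (Suc (r {w, y}))"
  obtains T' where "insert w T \<subseteq> T'" "T' \<subseteq> E - {y}"
    "simplification (contract M {y}) (restrict (contract M {y}) T')"
proof (rule simplification_extend)
  show "{y} \<subseteq> E" "insert w T \<subseteq> E - {y}"
    using wy T by auto
  show "\<forall>t\<in>insert w T. \<not> loop (contract M {y}) t"
    using \<open>insert w T \<subseteq> E - {y}\<close> rk_pair[OF _ wy(2)] rk_singleton[OF wy(2)]
    unfolding loop_contract by auto
  have "r {a, b, y} = 3" if "a \<in> insert w T" "b \<in> insert w T" "a \<noteq> b" for a b
  proof (cases "b = w")
    case True
    then show ?thesis
      using rk_pair_y_eq_3[of b a w y] that T T_notin_cl wy by (auto simp: insert_commute)
  next
    case False
    then show ?thesis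
      using rk_pair_y_eq_3[of a b w y] that T T_notin_cl T_indep wy by auto
  qed
  then show "\<forall>a\<in>insert w T. \<forall>b\<in>insert w T. a \<noteq> b \<longrightarrow> \<not> parallel (contract M {y}) a b"
    using rk_singleton[OF wy(2)] unfolding parallel_contract by (auto simp: insert_commute)
qed (use that in blast)

lemma hyperplane_if_not_vert_contractible:
  assumes wy: "w \<in> E" "y \<in> E" "w \<noteq> y"
    and good: "si_contract_good M N {w, y}" and not_contractible: "\<not> vert_contractible M N y"
  obtains H where "H \<subseteq> E" "cl M H = H" "y \<in> H" "w \<notin> H" "r H + 1 = r E" "r (E - H) = 3"
proof -
  have wyE: "{w, y} \<subseteq> E" "{y} \<subseteq> E"
    using wy by auto
  obtain S where S: "simplification (contract M {w, y}) S" "three_connected S" "has_minor S N"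
    using good unfolding si_contract_good_def by blast
  obtain Twy where Twy_reps: "S = restrict (contract M {w, y}) Twy" "Twy \<subseteq> E - {w, y}"
    "\<And>t. t \<in> Twy \<Longrightarrow> t \<notin> cl M {w, y}"
    "\<And>a b. a \<in> Twy \<Longrightarrow> b \<in> Twy \<Longrightarrow> a \<noteq> b \<Longrightarrow>
      r (insert a (insert b {w, y})) = Suc (Suc (r {w, y}))"
    "\<And>e. e \<in> E \<Longrightarrow> e \<notin> cl M {w, y} \<Longrightarrow> \<exists>t\<in>Twy. e \<in> cl M (insert t {w, y})"
    by (rule simplification_contract_reps[OF wyE(1) S(1)]) blast
  obtain Ty where Ty_reps: "insert w Twy \<subseteq> Ty" "Ty \<subseteq> E - {y}"
    and Sy: "simplification (contract M {y}) (restrict (contract M {y}) Ty)"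
    using simplification_contract_y_extend[OF wy Twy_reps(2,3,4)] .
  obtain T where T: "restrict (contract M {y}) Ty = restrict (contract M {y}) T" "ground (restrict (contract M {y}) Ty) = T"
    "\<And>a b. a \<in> T \<Longrightarrow> b \<in> T \<Longrightarrow> a \<noteq> b \<Longrightarrow> r (insert a (insert b {y})) = Suc (Suc (r {y}))"
    "\<And>e. e \<in> E \<Longrightarrow> e \<notin> cl M {y} \<Longrightarrow> \<exists>t\<in>T. e \<in> cl M (insert t {y})"
    by (rule simplification_contract_reps[OF wyE(2) Sy]) blast
  have "T = Ty"
    using T(2) Ty_reps(2) ground_restrict_contract by auto
  interpret vertical_pair M y w Ty Twy
  proof
    show "three_connected (restrict (contract M {w, y}) Twy)"
      using S(2) Twy_reps(1) by simp
    show "\<And>a b. a \<in> Ty \<Longrightarrow> b \<in> Ty \<Longrightarrow> a \<noteq> b \<Longrightarrow> r {a, b, y} = 3"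
      using T(3) \<open>T = Ty\<close> rk_singleton[OF wy(2)] by (simp add: insert_commute)
    show "\<And>e. e \<in> E \<Longrightarrow> e \<noteq> y \<Longrightarrow> \<exists>t\<in>Ty. e \<in> cl M {t, y}"
      using T(4) \<open>T = Ty\<close> notin_cl_singleton wy(2) by simp
  qed (use wy Twy_reps Ty_reps in \<open>auto simp: insert_commute\<close>)
  have "has_minor Sy N"
    using has_minor_Sy S(3) Twy_reps(1) by simp
  then have "\<not> three_connected Sy"
    using not_contractible Sy wy(2) unfolding vert_contractible_def si_contract_good_def by blast
  then show thesis
    using hyperplane_avoiding_w that by blast
qed

end

context finite_matroid
begin

lemma cocircuit_compl_hyperplane:
  assumes "H \<subseteq> E" "cl M H = H" "r H + 1 = r E"
  shows "cocircuit M (E - H)"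
  unfolding cocircuit_iff
proof (intro conjI ballI)
  have "E - (E - H) = H"
    using assms(1) by blast
  then show "r (E - (E - H)) \<noteq> r E"
    using assms(3) by simp
  fix d
  assume "d \<in> E - H"
  then show "r (insert d (E - (E - H))) = r E"
    using rk_insert_notin_cl[of d H] assms \<open>E - (E - H) = H\<close> by auto
qed blast

lemma rk_insert_cocircuit:
  assumes "cocircuit M C" "c \<in> C" "A \<subseteq> E - C"
  shows "r (insert c A) = Suc (r A)"
proof -
  have "c \<notin> cl M (E - C)"
    using assms(1,2) rk_insert_cl unfolding cocircuit_iff by fastforce
  then have "c \<notin> cl M A"
    using cl_mono[OF assms(3)] by blast
  then show ?thesis
    using assms(1,2) rk_insert_notin_cl unfolding cocircuit_iff by blast
qed

end

context simple_3_connected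
begin

text \<open>Swapping \<open>z\<close> and \<open>l\<close> preserves the rank of every set whose other elements lie in
  \<open>E - C\<close>, so it carries a simplification of \<open>M / {z, p}\<close> to one of \<open>M / {l, p}\<close>, provided
  \<open>l\<close> is the (at most one) representative of that simplification on the line, if any.\<close>

lemma si_contract_good_line_point:
  assumes C: "cocircuit M C" and p: "p \<in> E - C" and L: "L \<subseteq> E" "r L = 2" "p \<in> L" "3 \<le> card L"
    and z: "C - L = {z}" "L - {p} \<subseteq> C"
    and good: "si_contract_good M N {z, p}"
  obtains l where "l \<in> L - {p}" "si_contract_good M N {l, p}"
proof -
  have CE: "C \<subseteq> E" "z \<in> C" "z \<notin> L"
    using C z unfolding cocircuit_iff by auto
  have zp: "{z, p} \<subseteq> E" "r {z, p} = 2"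
    using CE p rk_pair[of z p] by auto
  obtain S where S: "simplification (contract M {z, p}) S" "three_connected S" "has_minor S N"
    using good unfolding si_contract_good_def by blast
  obtain T where T: "ground S = T" "T \<subseteq> E - {z, p}"
    and T_indep: "\<And>a b. a \<in> T \<Longrightarrow> b \<in> T \<Longrightarrow> a \<noteq> b \<Longrightarrow>
      r (insert a (insert b {z, p})) = Suc (Suc (r {z, p}))"
    by (rule simplification_contract_reps[OF zp(1) S(1)]) blast
  have T_line: "a = b" if "a \<in> T \<inter> (L - {p})" "b \<in> T \<inter> (L - {p})" for a b
  proof (rule ccontr)
    assume "a \<noteq> b"
    have "r (insert a (insert b {z, p})) \<le> r (insert z L)"
      using that L(3) by (intro rk_mono) auto
    also have "\<dots> \<le> 3"
      using rk_insert_le[of z L] L(2) by simp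
    finally show False
      using T_indep[OF _ _ \<open>a \<noteq> b\<close>] that zp(2) by simp
  qed
  obtain l where l: "l \<in> L - {p}" "T \<inter> (L - {p}) \<subseteq> {l}"
  proof (cases "T \<inter> (L - {p}) = {}")
    case True
    then show thesis
      using that card_ge_2_ex_neq[of L p] L(4) by auto
  next
    case False
    then show thesis
      using that T_line by blast
  qed
  have lC: "l \<in> C" "l \<noteq> z" "l \<in> E" "l \<noteq> p"
    using l z CE L by auto
  define \<phi> where "\<phi> e = (if e = z then l else if e = l then z else e)" for e
  define U where "U = (E - C - {p}) \<union> {l}"
  have rk_swap: "r (A \<union> {z, p}) + r {l, p} = r (\<phi> ` A \<union> {l, p}) + r {z, p}" if "A \<subseteq> U" for A
  proof (cases "l \<in> A")
    case True
    then have "\<phi> ` A \<union> {l, p} = A \<union> {z, p}"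
      using that CE lC unfolding U_def \<phi>_def by (auto simp: image_iff)
    then show ?thesis
      using rk_pair[of l p] lC p zp(2) by simp
  next
    case False
    then have "A \<subseteq> E - C" "p \<notin> C" "\<phi> ` A = A"
      using that p CE lC unfolding U_def \<phi>_def by auto
    then have "insert p A \<subseteq> E - C"
      using p by blast
    then have "r (insert z (insert p A)) = r (insert l (insert p A))"
      using rk_insert_cocircuit[OF C CE(2)] rk_insert_cocircuit[OF C lC(1)] by simp
    then show ?thesis
      using rk_pair[of l p] lC p zp \<open>\<phi> ` A = A\<close> by (simp add: insert_commute)
  qed
  interpret contraction_transfer M "{z, p}" "{l, p}" U \<phi>
  proof
    show "U \<subseteq> E - {z, p}" "\<phi> ` U \<subseteq> E - {l, p}"
      using CE lC p unfolding U_def \<phi>_def by auto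
    show "inj_on \<phi> U"
      unfolding inj_on_def \<phi>_def by auto
    show "e \<in> \<phi> ` U" if "e \<in> E - {l, p}" "e \<notin> cl M {l, p}" for e
    proof (cases "e \<in> C")
      case True
      have "L \<subseteq> cl M {l, p}"
        using line_subset_cl_pair[OF L(1,2)] l L(3) by auto
      then have "e = z"
        using True that z by blast
      then show ?thesis
        using lC unfolding U_def \<phi>_def by (auto simp: image_iff)
    next
      case False
      then show ?thesis
        using that CE lC unfolding U_def \<phi>_def by (auto simp: image_iff)
    qed
  qed (use rk_swap in blast)
  have "ground S \<subseteq> U"
  proof
    fix t
    assume "t \<in> ground S"
    then have "t \<in> E - {z, p}" "t \<in> T"
      using T by auto
    moreover have "t \<in> L" if "t \<in> C"
      using that z \<open>t \<in> E - {z, p}\<close> by blast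
    ultimately show "t \<in> U"
      using l(2) unfolding U_def by blast
  qed
  then have "si_contract_good M N {l, p}"
    using si_contract_good_transfer[OF S] by blast
  then show thesis
    using that l(1) by blast
qed

lemma vertbarrier_of_hyperplane:
  assumes "H \<subseteq> E" "cl M H = H" "r H + 1 = r E" "r (E - H) = 3"
    and "y \<in> H" "y \<in> cl M (E - H)" "w \<in> E - H" "si_contract_good M N {w, y}"
  shows "vertbarrier M N (E - H) y"
  unfolding vertbarrier_def
  using assms cocircuit_compl_hyperplane[OF assms(1-3)] by (auto simp: insert_commute)

lemma line_meeting_flat_once:
  assumes L: "L \<subseteq> E" "r L = 2" "3 \<le> card L" and H: "cl M H = H" "y \<in> L \<inter> H" "w \<in> L - H"
  shows "L - {y} \<subseteq> E - H" "y \<in> cl M (E - H)"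
proof -
  show sub: "L - {y} \<subseteq> E - H"
  proof
    fix l
    assume l: "l \<in> L - {y}"
    have "w \<in> cl M {l, y}"
      using line_subset_cl_pair[OF L(1,2)] l H(3) assms(5) by blast
    then have "l \<notin> H"
      using H cl_mono[of "{l, y}" H] by auto
    then show "l \<in> E - H"
      using l L(1) by blast
  qed
  obtain l where "l \<in> L" "l \<noteq> y" "l \<noteq> w"
    using card_ge_3_ex_neq2[OF L(3)] by blast
  then have "y \<in> cl M {w, l}"
    using line_subset_cl_pair[OF L(1,2), of w l] H(2,3) by blast
  moreover have "{w, l} \<subseteq> E - H"
    using sub \<open>l \<in> L\<close> \<open>l \<noteq> y\<close> H(3) L(1) by blast
  ultimately show "y \<in> cl M (E - H)"
    using cl_mono by blast
qed

lemma line_of_vertbarrier: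
  assumes "vertbarrier M N C p" "line_of M C p L"
  shows "p \<in> L" "L - {p} \<subseteq> C" "\<exists>z. C - L = {z}"
    and "L \<subseteq> E" "r L = 2" "3 \<le> card L"
proof -
  have L: "L \<subseteq> insert p C" "card (insert p C - L) = 1" "r L = 2"
    using assms(2) unfolding line_of_def by blast+
  have C: "r C = 3" "p \<notin> C"
    using assms(1) unfolding vertbarrier_def by blast+
  obtain z where z: "insert p C - L = {z}"
    using L(2) card_1_singletonE by blast
  show "p \<in> L"
  proof (rule ccontr)
    assume "p \<notin> L"
    then have "z = p"
      using z by (metis DiffI insertI1 singletonD)
    have "C \<subseteq> L"
    proof
      fix c
      assume "c \<in> C"
      show "c \<in> L"
      proof (rule ccontr)
        assume "c \<notin> L"
        then have "c = z"
          using z \<open>c \<in> C\<close> by (metis DiffI insertI2 singletonD)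
        then show False
          using \<open>z = p\<close> \<open>c \<in> C\<close> C(2) by simp
      qed
    qed
    then have "L = C"
      using L(1) \<open>p \<notin> L\<close> by blast
    then show False
      using L(3) C(1) by simp
  qed
  then have "C - L = insert p C - L"
    by simp
  then show "\<exists>z. C - L = {z}"
    using z by simp
  show "L - {p} \<subseteq> C"
    using L(1) by blast
  have "C \<subseteq> E" "p \<in> E"
    using assms(1) cl_subset_ground unfolding vertbarrier_def cocircuit_iff by auto
  then show "L \<subseteq> E" "r L = 2" "3 \<le> card L"
    using assms(2) unfolding line_of_def by auto
qed

lemma vertbarrier_line_point:
  assumes vb: "vertbarrier M N C p" and line: "line_of M C p L"
  obtains a where "a \<in> L - {p}" "si_contract_good M N {a, p}"
proof -
  obtain x where x: "x \<in> C" "si_contract_good M N {x, p}"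
    and C: "cocircuit M C" "p \<in> cl M C - C"
    using vb unfolding vertbarrier_def by blast
  note L = line_of_vertbarrier[OF vb line]
  obtain z where z: "C - L = {z}"
    using L(3) by blast
  show thesis
  proof (cases "x \<in> L")
    case True
    then show thesis
      using that x C by blast
  next
    case False
    then have "x = z"
      using x(1) z by blast
    then have "si_contract_good M N {z, p}"
      using x(2) by simp
    then show thesis
      using si_contract_good_line_point[OF C(1) _ L(4,5,1,6) z L(2)] C(2) cl_subset_ground that
      by blast
  qed
qed

lemma vertbarrier_through_line:
  assumes L: "L \<subseteq> E" "r L = 2" "3 \<le> card L"
    and a: "a \<in> L" "p \<in> L" "a \<noteq> p" "si_contract_good M N {a, p}"
    and y: "y \<in> L" "\<not> vert_contractible M N y"
  shows "\<exists>D. vertbarrier M N D y \<and> L - {y} \<subseteq> D"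
proof -
  obtain w where w: "w \<in> L" "w \<noteq> y"
    using card_ge_2_ex_neq[of L y] L(3) by auto
  have "{a, p} \<subseteq> cl M {w, y}" "{w, y} \<subseteq> cl M {a, p}"
    using line_subset_cl_pair[OF L(1,2)] a w y by auto
  moreover have "{a, p} \<subseteq> E" "{w, y} \<subseteq> E"
    using a w y L(1) by auto
  ultimately have good: "si_contract_good M N {w, y}"
    using si_contract_good_cl_eq[OF _ _ _ _ a(4)] by blast
  then obtain H where H: "H \<subseteq> E" "cl M H = H" "y \<in> H" "w \<notin> H" "r H + 1 = r E" "r (E - H) = 3"
    using hyperplane_if_not_vert_contractible[OF _ _ w(2) _ y(2)] w(1) y(1) L(1) by blast
  have "L - {y} \<subseteq> E - H" "y \<in> cl M (E - H)"
    using line_meeting_flat_once[OF L H(2)] H(3,4) y(1) w(1) by auto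
  moreover have "vertbarrier M N (E - H) y"
    using vertbarrier_of_hyperplane[OF H(1,2,5,6,3)] \<open>y \<in> cl M (E - H)\<close> good w(1) H(4) L(1)
    by blast
  ultimately show ?thesis
    by blast
qed
end

text \<open>Only the hypotheses on \<open>M\<close> are needed: \<open>N\<close> enters solely through the notion of an
  \<open>N\<close>-minor, and the disconnectedness of \<open>M | (C \<union> p)\<close> is already encoded in \<open>line_of M C p L\<close>.\<close>

theorem lemma5p12:
  fixes M :: "'a matroid" and N :: "'b matroid"
    and C :: "'a set" and p y :: 'a and L :: "'a set"
  assumes "matroid M" and "three_connected M" and "simple M"
    and "matroid N" and "three_connected N" and "simple N"
    and "has_minor M N"
    and "vertbarrier M N C p"
    and "\<not> connected (restrict M (insert p C))"
    and "line_of M C p L"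
    and "y \<in> L"
    and "\<not> vert_contractible M N y"
  shows "\<exists>D. vertbarrier M N D y \<and> L - {y} \<subseteq> D"
proof -
  interpret simple_3_connected M
    using assms(1-3) by unfold_locales
  note vb = assms(8) and line = assms(10)
  note L = line_of_vertbarrier[OF vb line]
  obtain a where "a \<in> L - {p}" "si_contract_good M N {a, p}"
    using vertbarrier_line_point[OF vb line] .
  then show ?thesis
    using vertbarrier_through_line[OF L(4-6) _ L(1)] assms(11,12) by blast
qed

end
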